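(* Consider the static single-object erasure-coded Byzantine read/write protocol described in the context over a set $C$ of flexnodes, at most $b<\frac{|C|-k}{3}$ of which are Byzantine, and suppose at most $\delta$ write operations are concurrent with any read. In any execution, if $\phi$ is a complete put-data$(\langle t_\phi,v_\phi\rangle)$ primitive on $C$ and $\pi$ is a get-tag or get-data primitive on $C$ invoked after $\phi$ completes, then $\pi$ returns a tag $t_\pi$ (for get-data, a pair $\langle t_\pi,v_\pi\rangle$) with $t_\pi\ge t_\phi$.
   Context: Model. $C$ is a fixed finite set of processes ("flexnodes") over asynchronous reliable channels (messages between nonfaulty processes eventually delivered unaltered). Up to $b$ flexnodes may be Byzantine. Processes invoking reads/writes follow the protocol but may crash. Signatures are unforgeable (no process can produce a valid signature of another). An $[n,k]$ RLNC code with $n=|C|$: $\mathrm{Encode}(v)$ produces $|C|$ coded elements, any $k$ of which (from the same encoding) recover $v$. Tags are pairs $(z,w)$, $z\in\mathbb{N}$, $w$ a writer identifier, ordered lexicographically. A parameter $\delta\ge1$ is fixed. A quorum is any subset of $C$ of size $\lceil (2|C|+k)/3\rceil$. State. Each flexnode keeps a set $List$ of signed triples $(\langle t,e\rangle,\sigma)$, initially holding the initial pair with tag $t_0$. Primitives (by flexnode $p$): get-tag: query all, each replies with its signed max-tag entry, wait for replies from a quorum, return the maximum tag among replies with valid signatures. put-data$(\langle t,v\rangle)$: encode $v$ into $e_1,\dots,e_{|C|}$, send $\langle t,e_j\rangle$ signed by $p$ to the $j$-th flexnode; a receiver adds it to $List$ if the signature verifies and no entry with tag $t$ exists, then if $|List|>\delta+1$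 removes the entries with minimum tag, and acknowledges; $p$ waits for a quorum of acknowledgements. get-data: query all, each replies with its $List$, wait for a quorum, keep verified pairs, take the maximum tag appearing in at least $k$ received lists, decode and return it with its tag; if no such tag exists the primitive does not complete. Operations: read = get-data then put-data of the obtained pair, returning it; write$(v)$ by $w$ = get-tag returning $t$, then put-data$(\langle (t.z+1,w),v\rangle)$. A primitive completes before another is invoked if its response step precedes the other's invocation step. *)

theory Defs
  imports Complex_Main "HOL-Library.Product_Lexorder"
begin

text \<open>
  Conventions.
  'p : flexnode identifiers; the fixed finite set C of flexnodes is a parameter.
  'c : identifiers of the (non-Byzantine, possibly crashing) client processes that
       invoke reads/writes; they are the writer identifiers, and they are linearly
       ordered so that tags (z, w) are ordered lexicographically (Product_Lexorder).
  'v : values, 'e : coded elements.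
  A signed triple is modelled as (tag, coded element, signer), signer = Some c for a
  client c and None for the initial entries.  Unforgeability of signatures is modelled
  by the global set  signed  of all triples actually signed so far: a signature verifies
  iff the triple is in that set; Byzantine nodes may send arbitrary messages (with their
  own identity as channel sender) but cannot add triples to  signed.
\<close>

type_synonym 'c tag = "nat \<times> 'c"
type_synonym ('c,'e) item = "'c tag \<times> 'e \<times> 'c option"

datatype ('c,'p) pid = Cl 'c | Fx 'p

datatype ('c,'e) payload =
    PutReq nat "('c,'e) item"          \<comment> \<open>put-data message of primitive i\<close>
  | PutAck nat
  | TagReq nat                          \<comment> \<open>get-tag query of primitive i\<close>
  | TagRep nat "('c,'e) item"
  | DataReq nat                         \<comment> \<open>get-data query of primitive i\<close>
  | DataRep nat "('c,'e) item set"

text \<open>messages: (channel sender, destination, payload)\<close>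
type_synonym ('c,'p,'e) msg = "('c,'p) pid \<times> ('c,'p) pid \<times> ('c,'e) payload"

text \<open>GT opid primid v replies       : get-tag of a write of value v
  GD opid primid replies         : get-data of a read
  PD opid primid t v sent acks   : put-data of the pair (t, v)\<close>
datatype ('c,'p,'v,'e) phase =
    Idle
  | GT nat nat 'v "'p \<rightharpoonup> ('c,'e) item"
  | GD nat nat "'p \<rightharpoonup> ('c,'e) item set"
  | PD nat nat "'c tag" 'v "'p set" "'p set"

datatype opkind = ReadOp | WriteOp
datatype ('c,'v) pkind = GetTag | GetData | PutData "'c tag" 'v
datatype ('c,'v) presult = RTag "'c tag" | RPair "'c tag" 'v | RAck

datatype ('c,'v) event =
    OpInv nat 'c opkind
  | OpResp nat
  | PrimInv nat 'c "('c,'v) pkind"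
  | PrimResp nat "('c,'v) presult"

record ('p,'c,'v,'e) gstate =
  lst    :: "'p \<Rightarrow> ('c,'e) item set"
  net    :: "('c,'p,'e) msg set"
  signed :: "('c,'e) item set"
  ph     :: "'c \<Rightarrow> ('c,'p,'v,'e) phase"
  ctr    :: nat                                \<comment> \<open>fresh identifiers\<close>
  hist   :: "('c,'v) event list"

definition qsize :: "nat \<Rightarrow> nat \<Rightarrow> nat" where
  "qsize n k = nat \<lceil>real (2 * n + k) / 3\<rceil>"

definition is_quorum :: "'p set \<Rightarrow> nat \<Rightarrow> 'p set \<Rightarrow> bool" where
  "is_quorum C k Q \<longleftrightarrow> Q \<subseteq> C \<and> card Q = qsize (card C) k"

definition trim :: "nat \<Rightarrow> ('c::linorder,'e) item set \<Rightarrow> ('c,'e) item set" where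
  "trim \<delta> L = (if card L > \<delta> + 1 then {x \<in> L. fst x \<noteq> Min (fst ` L)} else L)"

definition add_entry :: "nat \<Rightarrow> ('c::linorder,'e) item set \<Rightarrow> ('c,'e) item \<Rightarrow> ('c,'e) item set" where
  "add_entry \<delta> L x = (if \<exists>y\<in>L. fst y = fst x then L else trim \<delta> (insert x L))"

definition crecv :: "('c,'p,'v,'e) phase \<Rightarrow> 'p \<Rightarrow> ('c,'e) payload \<Rightarrow> ('c,'p,'v,'e) phase" where
  "crecv P j pl = (case P of
      GT oi i v R \<Rightarrow> (case pl of TagRep i' x \<Rightarrow>
          if i' = i \<and> R j = None then GT oi i v (R(j \<mapsto> x)) else P | _ \<Rightarrow> P)
    | GD oi i R \<Rightarrow> (case pl of DataRep i' X \<Rightarrow>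
          if i' = i \<and> R j = None then GD oi i (R(j \<mapsto> X)) else P | _ \<Rightarrow> P)
    | PD oi i t v S A \<Rightarrow> (case pl of PutAck i' \<Rightarrow>
          if i' = i then PD oi i t v S (insert j A) else P | _ \<Rightarrow> P)
    | Idle \<Rightarrow> P)"

definition init_state :: "'p set \<Rightarrow> ('v \<Rightarrow> 'p \<Rightarrow> 'e) \<Rightarrow> 'c tag \<Rightarrow> 'v \<Rightarrow> ('p,'c,'v,'e) gstate" where
  "init_state C enc t0 v0 =
     \<lparr> lst = (\<lambda>j. {(t0, enc v0 j, None)}),
       net = {},
       signed = {(t0, enc v0 j, None) | j. j \<in> C},
       ph = (\<lambda>c. Idle),
       ctr = 0,
       hist = [] \<rparr>"

text \<open>Parameters: C flexnodes, B Byzantine flexnodes, k code dimension, \<delta> list bound,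
  enc (coded element for the j-th flexnode), dec (decoding from received (node, element) pairs).\<close>
inductive step :: "'p set \<Rightarrow> 'p set \<Rightarrow> nat \<Rightarrow> nat \<Rightarrow> ('v \<Rightarrow> 'p \<Rightarrow> 'e) \<Rightarrow> (('p \<times> 'e) set \<Rightarrow> 'v)
                   \<Rightarrow> ('p,'c::linorder,'v,'e) gstate \<Rightarrow> ('p,'c,'v,'e) gstate \<Rightarrow> bool"
  for C B k \<delta> enc dec where
  inv_write: "ph s c = Idle \<Longrightarrow>
    step C B k \<delta> enc dec s
      (s\<lparr> ph := (ph s)(c := GT (ctr s) (Suc (ctr s)) v Map.empty),
          ctr := ctr s + 2,
          net := net s \<union> {(Cl c, Fx j, TagReq (Suc (ctr s))) | j. j \<in> C},
          hist := hist s @ [OpInv (ctr s) c WriteOp, PrimInv (Suc (ctr s)) c GetTag] \<rparr>)"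
| inv_read: "ph s c = Idle \<Longrightarrow>
    step C B k \<delta> enc dec s
      (s\<lparr> ph := (ph s)(c := GD (ctr s) (Suc (ctr s)) Map.empty),
          ctr := ctr s + 2,
          net := net s \<union> {(Cl c, Fx j, DataReq (Suc (ctr s))) | j. j \<in> C},
          hist := hist s @ [OpInv (ctr s) c ReadOp, PrimInv (Suc (ctr s)) c GetData] \<rparr>)"
| client_recv: "(Fx j, Cl c, pl) \<in> net s \<Longrightarrow> j \<in> C \<Longrightarrow>
    step C B k \<delta> enc dec s
      (s\<lparr> net := net s - {(Fx j, Cl c, pl)},
          ph := (ph s)(c := crecv (ph s c) j pl) \<rparr>)"
| end_gettag: "ph s c = GT oi i v R \<Longrightarrow> is_quorum C k Q \<Longrightarrow> Q \<subseteq> dom R \<Longrightarrow>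
    T = {fst x | x j. j \<in> Q \<and> R j = Some x \<and> x \<in> signed s} \<Longrightarrow> T \<noteq> {} \<Longrightarrow>
    step C B k \<delta> enc dec s
      (s\<lparr> ph := (ph s)(c := PD oi (ctr s) (Suc (fst (Max T)), c) v {} {}),
          ctr := Suc (ctr s),
          hist := hist s @ [PrimResp i (RTag (Max T)),
                            PrimInv (ctr s) c (PutData (Suc (fst (Max T)), c) v)] \<rparr>)"
| end_getdata: "ph s c = GD oi i R \<Longrightarrow> is_quorum C k Q \<Longrightarrow> Q \<subseteq> dom R \<Longrightarrow>
    L = (\<lambda>j. the (R j) \<inter> signed s) \<Longrightarrow>
    T = {t. k \<le> card {j \<in> Q. \<exists>e \<sigma>. (t, e, \<sigma>) \<in> L j}} \<Longrightarrow> T \<noteq> {} \<Longrightarrow>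
    w = dec {(j, e) | j e. j \<in> Q \<and> (\<exists>\<sigma>. (Max T, e, \<sigma>) \<in> L j)} \<Longrightarrow>
    step C B k \<delta> enc dec s
      (s\<lparr> ph := (ph s)(c := PD oi (ctr s) (Max T) w {} {}),
          ctr := Suc (ctr s),
          hist := hist s @ [PrimResp i (RPair (Max T) w), PrimInv (ctr s) c (PutData (Max T) w)] \<rparr>)"
| send_put: "ph s c = PD oi i t v S A \<Longrightarrow> j \<in> C \<Longrightarrow> j \<notin> S \<Longrightarrow>
    step C B k \<delta> enc dec s
      (s\<lparr> ph := (ph s)(c := PD oi i t v (insert j S) A),
          signed := insert (t, enc v j, Some c) (signed s),
          net := insert (Cl c, Fx j, PutReq i (t, enc v j, Some c)) (net s) \<rparr>)"
| end_put: "ph s c = PD oi i t v S A \<Longrightarrow> S = C \<Longrightarrow> is_quorum C k Q \<Longrightarrow> Q \<subseteq> A \<Longrightarrow>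
    step C B k \<delta> enc dec s
      (s\<lparr> ph := (ph s)(c := Idle),
          hist := hist s @ [PrimResp i RAck, OpResp oi] \<rparr>)"
| node_put: "j \<in> C \<Longrightarrow> j \<notin> B \<Longrightarrow> (src, Fx j, PutReq i x) \<in> net s \<Longrightarrow>
    step C B k \<delta> enc dec s
      (s\<lparr> net := insert (Fx j, src, PutAck i) (net s - {(src, Fx j, PutReq i x)}),
          lst := (lst s)(j := (if x \<in> signed s then add_entry \<delta> (lst s j) x else lst s j)) \<rparr>)"
| node_tag: "j \<in> C \<Longrightarrow> j \<notin> B \<Longrightarrow> (src, Fx j, TagReq i) \<in> net s \<Longrightarrow>
    x \<in> lst s j \<Longrightarrow> \<forall>y\<in>lst s j. fst y \<le> fst x \<Longrightarrow>
    step C B k \<delta> enc dec s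
      (s\<lparr> net := insert (Fx j, src, TagRep i x) (net s - {(src, Fx j, TagReq i)}) \<rparr>)"
| node_data: "j \<in> C \<Longrightarrow> j \<notin> B \<Longrightarrow> (src, Fx j, DataReq i) \<in> net s \<Longrightarrow>
    step C B k \<delta> enc dec s
      (s\<lparr> net := insert (Fx j, src, DataRep i (lst s j)) (net s - {(src, Fx j, DataReq i)}) \<rparr>)"
  \<comment> \<open>Byzantine flexnode j sends an arbitrary message (it cannot forge signatures,
      i.e. it cannot enlarge  signed, and cannot impersonate other processes)\<close>
| byz_send: "j \<in> B \<Longrightarrow>
    step C B k \<delta> enc dec s (s\<lparr> net := insert (Fx j, dst, pl) (net s) \<rparr>)"

inductive reach :: "'p set \<Rightarrow> 'p set \<Rightarrow> nat \<Rightarrow> nat \<Rightarrow> ('v \<Rightarrow> 'p \<Rightarrow> 'e) \<Rightarrow> (('p \<times> 'e) set \<Rightarrow> 'v)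
                    \<Rightarrow> 'c tag \<Rightarrow> 'v \<Rightarrow> ('p,'c::linorder,'v,'e) gstate \<Rightarrow> bool"
  for C B k \<delta> enc dec t0 v0 where
  reach_init: "reach C B k \<delta> enc dec t0 v0 (init_state C enc t0 v0)"
| reach_step: "reach C B k \<delta> enc dec t0 v0 s \<Longrightarrow> step C B k \<delta> enc dec s s'
                 \<Longrightarrow> reach C B k \<delta> enc dec t0 v0 s'"

definition op_invoked :: "('c,'v) event list \<Rightarrow> nat \<Rightarrow> bool" where
  "op_invoked h x \<longleftrightarrow> (\<exists>n c kd. n < length h \<and> h ! n = OpInv x c kd)"

definition is_read :: "('c,'v) event list \<Rightarrow> nat \<Rightarrow> bool" where
  "is_read h x \<longleftrightarrow> (\<exists>n c. n < length h \<and> h ! n = OpInv x c ReadOp)"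

definition is_write :: "('c,'v) event list \<Rightarrow> nat \<Rightarrow> bool" where
  "is_write h x \<longleftrightarrow> (\<exists>n c. n < length h \<and> h ! n = OpInv x c WriteOp)"

definition completes_before :: "('c,'v) event list \<Rightarrow> nat \<Rightarrow> nat \<Rightarrow> bool" where
  "completes_before h x y \<longleftrightarrow>
     (\<exists>n m c kd. n < m \<and> m < length h \<and> h ! n = OpResp x \<and> h ! m = OpInv y c kd)"

definition concurrent :: "('c,'v) event list \<Rightarrow> nat \<Rightarrow> nat \<Rightarrow> bool" where
  "concurrent h x y \<longleftrightarrow> op_invoked h x \<and> op_invoked h y \<and>
     \<not> completes_before h x y \<and> \<not> completes_before h y x"

definition writes_conc_bounded :: "nat \<Rightarrow> ('c,'v) event list \<Rightarrow> bool" where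
  "writes_conc_bounded \<delta> h \<longleftrightarrow>
     (\<forall>r. is_read h r \<longrightarrow> card {w. is_write h w \<and> concurrent h w r} \<le> \<delta>)"

end

theory Submission
  imports Defs
begin

text \<open>
  Every signed tag is the initial tag or the tag of a single write operation, and correct
  flexnodes store and send only signed data.  When put-data of tag \<open>t\<close> completes, a quorum
  has acknowledged it, and each correct member of that quorum keeps, from then on, either \<open>t\<close>
  or at least \<open>\<delta> + 1\<close> larger tags in its list: trimming only drops the minimum.  Since
  \<open>3 b + k < |C|\<close>, two quorums share more than \<open>k\<close> correct flexnodes.  Hence a later get-tag
  hears a tag \<open>\<ge> t\<close> from one of them.  For get-data, let \<open>tmax \<ge> t\<close> be the largest tag of
  a put-data completed before the read started.  A stored tag larger than \<open>tmax\<close> belongs to a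
  write concurrent with the read, and distinct tags belong to distinct writes; with at most
  \<open>\<delta>\<close> such writes, every correct flexnode shared by the two quorums still holds \<open>tmax\<close>
  itself.  So \<open>tmax\<close> occurs in more than \<open>k\<close> of the lists received, and the returned tag
  is at least \<open>tmax\<close>.
\<close>

section \<open>Lists covering a tag\<close>

definition covers :: "nat \<Rightarrow> 'a::linorder set \<Rightarrow> 'a \<Rightarrow> bool" where
  "covers d G t \<longleftrightarrow> t \<in> G \<or> d + 1 \<le> card {t' \<in> G. t < t'}"

lemma covers_obtain_ge:
  assumes "covers d G t"
  obtains t' where "t' \<in> G" "t \<le> t'"
proof (cases "t \<in> G")
  case False
  then have "card {t' \<in> G. t < t'} \<noteq> 0" using assms by (simp add: covers_def)
  then have "{t' \<in> G. t < t'} \<noteq> {}" by (metis card.empty)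
  then show ?thesis using that by (blast intro: less_imp_le)
qed (use that in blast)

lemma covers_insert:
  assumes "finite G" "covers d G t"
  shows "covers d (insert x G) t"
proof -
  have "card {t' \<in> G. t < t'} \<le> card {t' \<in> insert x G. t < t'}"
    using assms(1) by (intro card_mono) auto
  then show ?thesis using assms(2) unfolding covers_def by auto
qed

lemma covers_Diff_Min:
  assumes "finite G" "covers d G t" "d + 1 < card G"
  shows "covers d (G - {Min G}) t"
proof -
  have "G \<noteq> {}" using assms(3) by auto
  then have card_less: "card (G - {Min G}) = card G - 1" using assms(1) by simp
  show ?thesis
  proof (cases "t \<le> Min G")
    case True
    then have "{t' \<in> G - {Min G}. t < t'} = G - {Min G}"
      using assms(1) by (auto intro: le_less_trans simp: order.not_eq_order_implies_strict)
    then have "card {t' \<in> G - {Min G}. t < t'} = card G - 1" using card_less by simp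
    then show ?thesis using assms(3) unfolding covers_def by (intro disjI2) linarith
  next
    case False
    then have "{t' \<in> G. t < t'} \<subseteq> {t' \<in> G - {Min G}. t < t'}" by auto
    then have "card {t' \<in> G. t < t'} \<le> card {t' \<in> G - {Min G}. t < t'}"
      using assms(1) by (intro card_mono) auto
    moreover have "t \<noteq> Min G" using False by auto
    ultimately show ?thesis using assms(2) unfolding covers_def by auto
  qed
qed

lemma tags_trim:
  "fst ` trim d L = (if d + 1 < card L then fst ` L - {Min (fst ` L)} else fst ` L)"
  by (auto simp: trim_def)

lemma add_entry_subset: "add_entry d L x \<subseteq> insert x L"
  by (auto simp: add_entry_def trim_def)

lemma inj_on_fst_add_entry:
  assumes "inj_on fst L"
  shows "inj_on fst (add_entry d L x)"
proof (cases "fst x \<in> fst ` L")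
  case False
  then have "inj_on fst (insert x L)" using assms by auto
  then show ?thesis by (rule inj_on_subset) (auto simp: add_entry_def trim_def)
qed (use assms in \<open>auto simp: add_entry_def\<close>)

lemma covers_add_entry:
  assumes "finite L" "inj_on fst L" "covers d (fst ` L) t \<or> t = fst x"
  shows "covers d (fst ` add_entry d L x) t"
proof (cases "fst x \<in> fst ` L")
  case True
  then show ?thesis using assms(3) by (auto simp: add_entry_def covers_def)
next
  case False
  let ?L = "insert x L"
  have "card (fst ` ?L) = card ?L" using False assms(2) by (intro card_image) auto
  moreover have cov: "covers d (fst ` ?L) t"
    using assms(1,3) covers_insert[of "fst ` L" d t "fst x"] by (auto simp: covers_def)
  ultimately have "covers d (fst ` trim d ?L) t"
    using covers_Diff_Min[OF _ cov] assms(1) by (simp add: tags_trim)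
  moreover have "\<not> (\<exists>y\<in>L. fst y = fst x)" using False by (metis image_eqI)
  ultimately show ?thesis by (simp add: add_entry_def)
qed

section \<open>Histories\<close>

lemma map_filter_append:
  "List.map_filter f (xs @ ys) = List.map_filter f xs @ List.map_filter f ys"
  by (simp add: List.map_filter_def)

lemma set_map_filter: "set (List.map_filter f xs) = {y. \<exists>x\<in>set xs. f x = Some y}"
  by (force simp: List.map_filter_def)

lemma distinct_map_filter_nth_eq:
  assumes "distinct (List.map_filter f xs)" "a < length xs" "b < length xs"
    "f (xs ! a) = Some y" "f (xs ! b) = Some y"
  shows "a = b"
  using assms
proof (induction xs arbitrary: a b)
  case (Cons x xs)
  have "y \<in> set (List.map_filter f xs)" if "n < length xs" "f (xs ! n) = Some y" for n
    using that by (auto simp: set_map_filter)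
  with Cons show ?case
    by (cases a; cases b) (auto split: option.splits)
qed simp

lemma distinct_map_filter_eq:
  assumes "distinct (List.map_filter f xs)" "x \<in> set xs" "x' \<in> set xs" "f x = Some y" "f x' = Some y"
  shows "x = x'"
  using assms distinct_map_filter_nth_eq[OF assms(1)] by (metis in_set_conv_nth)

fun event_id :: "('c,'v) event \<Rightarrow> nat" where
  "event_id (OpInv x c kd) = x"
| "event_id (OpResp x) = x"
| "event_id (PrimInv x c pk) = x"
| "event_id (PrimResp x r) = x"

(* Operation and primitive invocations draw their identifiers from the same counter. *)
fun inv_id :: "('c,'v) event \<Rightarrow> nat option" where
  "inv_id (OpInv x c kd) = Some x"
| "inv_id (PrimInv x c pk) = Some x"
| "inv_id _ = None"

fun op_resp_id :: "('c,'v) event \<Rightarrow> nat option" where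
  "op_resp_id (OpResp x) = Some x"
| "op_resp_id _ = None"

lemma inv_id_SomeD: "inv_id e = Some x \<Longrightarrow> event_id e = x"
  by (cases e) auto

lemma op_resp_id_Some_iff [simp]: "op_resp_id e = Some x \<longleftrightarrow> e = OpResp x"
  by (cases e) auto

fun payload_id :: "('c,'e) payload \<Rightarrow> nat" where
  "payload_id (PutReq i x) = i"
| "payload_id (PutAck i) = i"
| "payload_id (TagReq i) = i"
| "payload_id (TagRep i x) = i"
| "payload_id (DataReq i) = i"
| "payload_id (DataRep i X) = i"

definition precedes :: "'a list \<Rightarrow> 'a \<Rightarrow> 'a \<Rightarrow> bool" where
  "precedes h x y \<longleftrightarrow> (\<exists>a b. a < b \<and> b < length h \<and> h ! a = x \<and> h ! b = y)"

fun put_tag :: "('c,'v) event \<Rightarrow> 'c tag option" where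
  "put_tag (PrimInv i c (PutData t v)) = Some t"
| "put_tag _ = None"

definition completed_put_tags :: "('c::linorder,'v) event list \<Rightarrow> nat \<Rightarrow> 'c tag set" where
  "completed_put_tags h n =
     {t. \<exists>a i c v. a < n \<and> h ! a = PrimResp i RAck \<and> PrimInv i c (PutData t v) \<in> set h}"

lemma finite_completed_put_tags: "finite (completed_put_tags h n)"
proof (rule finite_subset)
  show "completed_put_tags h n \<subseteq> set (List.map_filter put_tag h)"
    unfolding completed_put_tags_def set_map_filter by force
qed simp

lemma latest_completed_put:
  assumes "t \<in> completed_put_tags h n"
  obtains a i c v tmax where "t \<le> tmax" "\<forall>t'\<in>completed_put_tags h n. t' \<le> tmax"
    "a < n" "h ! a = PrimResp i RAck" "PrimInv i c (PutData tmax v) \<in> set h"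
proof -
  let ?tmax = "Max (completed_put_tags h n)"
  have "?tmax \<in> completed_put_tags h n" using Max_in[OF finite_completed_put_tags] assms by blast
  moreover have "\<forall>t'\<in>completed_put_tags h n. t' \<le> ?tmax"
    using Max_ge[OF finite_completed_put_tags] by blast
  ultimately show ?thesis using that assms unfolding completed_put_tags_def by blast
qed

lemma finite_op_invoked: "finite {w. op_invoked h w}"
proof -
  have "{w. op_invoked h w} \<subseteq> event_id ` set h"
    unfolding op_invoked_def by (force intro: image_eqI[OF _ nth_mem])
  then show ?thesis using finite_subset by blast
qed

lemma op_invoked_append: "op_invoked h w \<Longrightarrow> op_invoked (h @ E) w"
  unfolding op_invoked_def by (metis length_append nth_append trans_less_add1)

lemma completes_before_prefix:
  assumes "distinct (List.map_filter inv_id (h @ E))" "op_invoked h y" "completes_before (h @ E) x y"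
  shows "completes_before h x y"
proof -
  obtain n m c kd where a: "n < m" "m < length (h @ E)" "(h @ E) ! n = OpResp x"
      "(h @ E) ! m = OpInv y c kd"
    using assms(3) unfolding completes_before_def by blast
  obtain m0 c0 kd0 where b: "m0 < length h" "h ! m0 = OpInv y c0 kd0"
    using assms(2) unfolding op_invoked_def by blast
  have "m = m0"
    using distinct_map_filter_nth_eq[OF assms(1) a(2), of m0 y] a(4) b by (simp add: nth_append)
  then have "n < length h" "h ! n = OpResp x" using a(1,3) b(1) by (auto simp: nth_append)
  then show ?thesis using a(1) b \<open>m = m0\<close> unfolding completes_before_def
    by (intro exI[of _ n] exI[of _ m0] exI[of _ c0] exI[of _ kd0]) simp
qed

lemma is_write_append: "is_write h w \<Longrightarrow> is_write (h @ E) w"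
  unfolding is_write_def by (metis length_append nth_append trans_less_add1)

lemma is_read_append: "is_read h r \<Longrightarrow> is_read (h @ E) r"
  unfolding is_read_def by (metis length_append nth_append trans_less_add1)

lemma concurrent_append:
  assumes "distinct (List.map_filter inv_id (h @ E))" "concurrent h w r"
  shows "concurrent (h @ E) w r"
  using assms(2) completes_before_prefix[OF assms(1)] op_invoked_append
  unfolding concurrent_def by blast

lemma writes_conc_bounded_prefix:
  assumes "writes_conc_bounded d (h @ E)" "distinct (List.map_filter inv_id (h @ E))"
  shows "writes_conc_bounded d h"
  unfolding writes_conc_bounded_def
proof (intro allI impI)
  fix r assume r: "is_read h r"
  let ?W = "\<lambda>h. {w. is_write h w \<and> concurrent h w r}"
  have "?W h \<subseteq> ?W (h @ E)" using is_write_append concurrent_append[OF assms(2)] by blast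
  moreover have "finite (?W (h @ E))"
    using finite_op_invoked[of "h @ E"] by (rule finite_subset[rotated]) (auto simp: concurrent_def)
  ultimately have "card (?W h) \<le> card (?W (h @ E))" by (rule card_mono[rotated])
  also have "\<dots> \<le> d" using assms(1) is_read_append[OF r] unfolding writes_conc_bounded_def by blast
  finally show "card (?W h) \<le> d" .
qed

section \<open>Client phases\<close>

fun phase_op :: "('c,'p,'v,'e) phase \<Rightarrow> nat option" where
  "phase_op Idle = None"
| "phase_op (GT oi i v R) = Some oi"
| "phase_op (GD oi i R) = Some oi"
| "phase_op (PD oi i t v S A) = Some oi"

fun phase_logged :: "('c,'v) event list \<Rightarrow> 'c \<Rightarrow> ('c,'p,'v,'e) phase \<Rightarrow> bool" where
  "phase_logged h c Idle \<longleftrightarrow> True"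
| "phase_logged h c (GT oi i v R) \<longleftrightarrow>
     OpInv oi c WriteOp \<in> set h \<and> OpResp oi \<notin> set h \<and> PrimInv i c GetTag \<in> set h"
| "phase_logged h c (GD oi i R) \<longleftrightarrow>
     \<comment> \<open>adjacent, so what completes before the get-data completes before the read\<close>
     (\<exists>m. Suc m < length h \<and> h ! m = OpInv oi c ReadOp \<and> h ! Suc m = PrimInv i c GetData) \<and>
     OpResp oi \<notin> set h"
| "phase_logged h c (PD oi i t v S A) \<longleftrightarrow>
     (\<exists>kd. OpInv oi c kd \<in> set h) \<and> OpResp oi \<notin> set h \<and> PrimInv i c (PutData t v) \<in> set h"

lemma phase_logged_append:
  "phase_logged h c P \<Longrightarrow> (\<And>x. OpResp x \<in> set E \<Longrightarrow> phase_op P \<noteq> Some x) \<Longrightarrow>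
   phase_logged (h @ E) c P"
  by (cases P) (auto simp: nth_append)

lemma phase_logged_crecv: "phase_logged h c P \<Longrightarrow> phase_logged h c (crecv P j pl)"
  by (cases P; cases pl) (auto simp: crecv_def)

lemma phase_logged_op:
  "phase_logged h c P \<Longrightarrow> phase_op P = Some x \<Longrightarrow> \<exists>kd. OpInv x c kd \<in> set h"
  by (cases P) (auto, metis Suc_lessD nth_mem)

lemma crecv_GT:
  "crecv P j pl = GT oi i v R' \<Longrightarrow>
   \<exists>R. P = GT oi i v R \<and> (R' = R \<or> (\<exists>x. pl = TagRep i x \<and> R' = R(j \<mapsto> x)))"
  by (cases P; cases pl) (auto simp: crecv_def split: if_splits)

lemma crecv_GD:
  "crecv P j pl = GD oi i R' \<Longrightarrow>
   \<exists>R. P = GD oi i R \<and> (R' = R \<or> (\<exists>X. pl = DataRep i X \<and> R' = R(j \<mapsto> X)))"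
  by (cases P; cases pl) (auto simp: crecv_def split: if_splits)

lemma crecv_PD:
  "crecv P j pl = PD oi i t v S A' \<Longrightarrow> \<exists>A. P = PD oi i t v S A"
  by (cases P; cases pl) (auto simp: crecv_def split: if_splits)

locale protocol =
  fixes C B :: "'p set" and k \<delta> :: nat and enc :: "'v \<Rightarrow> 'p \<Rightarrow> 'e"
    and dec :: "('p \<times> 'e) set \<Rightarrow> 'v" and t0 :: "nat \<times> 'c::linorder" and v0 :: 'v
  assumes finite_C: "finite C" and k_pos: "1 \<le> k"
begin

abbreviation reachable :: "('p,'c,'v,'e) gstate \<Rightarrow> bool" where
  "reachable \<equiv> reach C B k \<delta> enc dec t0 v0"

abbreviation prot_step :: "('p,'c,'v,'e) gstate \<Rightarrow> ('p,'c,'v,'e) gstate \<Rightarrow> bool" where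
  "prot_step \<equiv> step C B k \<delta> enc dec"

section \<open>Well-formed histories\<close>

(* Byzantine flexnodes choose identifiers freely; correct ones echo them back to the sender. *)
definition ids_fresh :: "('p,'c,'v,'e) gstate \<Rightarrow> bool" where
  "ids_fresh s \<longleftrightarrow> (\<forall>e\<in>set (hist s). event_id e < ctr s) \<and>
     (\<forall>c dst pl. (Cl c, dst, pl) \<in> net s \<longrightarrow> payload_id pl < ctr s) \<and>
     (\<forall>j c pl. j \<notin> B \<longrightarrow> (Fx j, Cl c, pl) \<in> net s \<longrightarrow> payload_id pl < ctr s)"

definition wf_history :: "('p,'c,'v,'e) gstate \<Rightarrow> bool" where
  "wf_history s \<longleftrightarrow> ids_fresh s \<and>
     distinct (List.map_filter inv_id (hist s)) \<and> distinct (List.map_filter op_resp_id (hist s)) \<and>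
     (\<forall>c. phase_logged (hist s) c (ph s c))"

lemma phase_logged_state: "wf_history s \<Longrightarrow> phase_logged (hist s) c (ph s c)"
  by (simp add: wf_history_def)

lemma wf_history_init: "wf_history (init_state C enc t0 v0)"
  by (simp add: wf_history_def ids_fresh_def init_state_def List.map_filter_def)

lemma ids_fresh_step:
  assumes "wf_history s" "prot_step s s'"
  shows "ids_fresh s'"
proof -
  have ev: "\<forall>e\<in>set (hist s). event_id e < ctr s"
    and cl: "\<And>c dst pl. (Cl c, dst, pl) \<in> net s \<Longrightarrow> payload_id pl < ctr s"
    and fx: "\<And>j c pl. j \<notin> B \<Longrightarrow> (Fx j, Cl c, pl) \<in> net s \<Longrightarrow> payload_id pl < ctr s"
    and ph: "\<And>c. phase_logged (hist s) c (ph s c)"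
    using assms(1) by (auto simp: wf_history_def ids_fresh_def)
  have inv_lt: "i < ctr s" if "PrimInv i c pk \<in> set (hist s)" for i c pk
    using that ev by force
  from assms(2) show ?thesis
  proof (cases rule: step.cases)
    case (end_gettag c oi i v R Q T)
    then show ?thesis using ev cl fx ph[of c] inv_lt by (auto simp: ids_fresh_def less_Suc_eq)
  next
    case (end_getdata c oi i R Q L T w)
    then show ?thesis using ev cl fx ph[of c] inv_lt
      by (auto simp: ids_fresh_def less_Suc_eq dest!: nth_mem)
  next
    case (send_put c oi i t v S A j)
    then show ?thesis using ev cl fx ph[of c] inv_lt by (auto simp: ids_fresh_def)
  next
    case (end_put c oi i t v S A Q)
    then show ?thesis using ev cl fx ph[of c] inv_lt by (auto simp: ids_fresh_def)
  next
    case (node_put j src i x)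
    then show ?thesis using ev cl fx cl[of _ "Fx j" "PutReq i x"]
      by (cases src) (auto simp: ids_fresh_def)
  next
    case (node_tag j src i x)
    then show ?thesis using ev cl fx cl[of _ "Fx j" "TagReq i"]
      by (cases src) (auto simp: ids_fresh_def)
  next
    case (node_data j src i)
    then show ?thesis using ev cl fx cl[of _ "Fx j" "DataReq i"]
      by (cases src) (auto simp: ids_fresh_def)
  qed (use ev in \<open>auto simp: ids_fresh_def dest: cl fx\<close>)
qed

lemma distinct_ids_step:
  assumes "wf_history s" "prot_step s s'"
  shows "distinct (List.map_filter inv_id (hist s')) \<and> distinct (List.map_filter op_resp_id (hist s'))"
proof -
  have ev: "\<forall>e\<in>set (hist s). event_id e < ctr s"
    and d: "distinct (List.map_filter inv_id (hist s))" "distinct (List.map_filter op_resp_id (hist s))"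
    and ph: "\<And>c. phase_logged (hist s) c (ph s c)"
    using assms(1) by (auto simp: wf_history_def ids_fresh_def)
  from assms(2) show ?thesis
  proof (cases rule: step.cases)
    case (end_put c oi i t v S A Q)
    then show ?thesis using d ph[of c] by (auto simp: map_filter_append set_map_filter)
  qed (use ev d in \<open>auto simp: map_filter_append set_map_filter dest!: inv_id_SomeD\<close>)
qed

lemma phase_logged_step:
  assumes "wf_history s" "prot_step s s'"
  shows "phase_logged (hist s') c' (ph s' c')"
proof -
  have ev: "\<forall>e\<in>set (hist s). event_id e < ctr s"
    and d: "distinct (List.map_filter inv_id (hist s))"
    and ph: "\<And>c. phase_logged (hist s) c (ph s c)"
    using assms(1) by (auto simp: wf_history_def ids_fresh_def)
  from assms(2) show ?thesis
  proof (cases rule: step.cases)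
    case (end_getdata c oi i R Q L T w)
    have "\<exists>kd. OpInv oi c kd \<in> set (hist s)"
      using phase_logged_op[OF ph[of c]] end_getdata(2) by simp
    then show ?thesis using end_getdata(1,2) ph[of c'] ph[of c]
      by (cases "c' = c") (auto intro!: phase_logged_append)
  next
    case (inv_read c)
    then show ?thesis using ev ph[of c']
      by (auto intro!: phase_logged_append exI[of _ "length (hist s)"] simp: nth_append)
  next
    case (client_recv j c pl)
    then show ?thesis using ph[of c'] phase_logged_crecv by auto
  next
    case (end_put c oi i t v S A Q)
    have "phase_op (ph s c') \<noteq> Some oi" if "c' \<noteq> c"
    proof
      assume "phase_op (ph s c') = Some oi"
      then obtain kd' where "OpInv oi c' kd' \<in> set (hist s)"
        using phase_logged_op[OF ph[of c']] by blast
      moreover obtain kd where "OpInv oi c kd \<in> set (hist s)" using ph[of c] end_put(2) by auto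
      ultimately have "OpInv oi c' kd' = OpInv oi c kd"
        using distinct_map_filter_eq[OF d, of "OpInv oi c' kd'" "OpInv oi c kd" oi] by simp
      then show False using that by simp
    qed
    then show ?thesis using end_put(1) ph[of c'] by (auto intro: phase_logged_append)
  qed (use ev ph[of c'] in \<open>auto intro!: phase_logged_append\<close>)
qed

lemma wf_history_step:
  assumes "wf_history s" "prot_step s s'"
  shows "wf_history s'"
  using ids_fresh_step[OF assms] distinct_ids_step[OF assms] phase_logged_step[OF assms]
  unfolding wf_history_def by blast

lemma step_hist_extends:
  "prot_step s s' \<Longrightarrow> \<exists>E. hist s' = hist s @ E \<and> (\<forall>i c pk. PrimInv i c pk \<in> set E \<longrightarrow> ctr s \<le> i)"
  by (cases rule: step.cases) auto

lemma op_inv_unique: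
  "wf_history s \<Longrightarrow> OpInv x c kd \<in> set (hist s) \<Longrightarrow> OpInv x c' kd' \<in> set (hist s) \<Longrightarrow> c' = c \<and> kd' = kd"
  using distinct_map_filter_eq[of inv_id "hist s" "OpInv x c kd" "OpInv x c' kd'" x]
  by (auto simp: wf_history_def)

lemma prim_inv_unique:
  "wf_history s \<Longrightarrow> PrimInv i c pk \<in> set (hist s) \<Longrightarrow> PrimInv i c' pk' \<in> set (hist s) \<Longrightarrow> c' = c \<and> pk' = pk"
  using distinct_map_filter_eq[of inv_id "hist s" "PrimInv i c pk" "PrimInv i c' pk'" i]
  by (auto simp: wf_history_def)

lemma prim_inv_index_unique:
  "wf_history s \<Longrightarrow> a < length (hist s) \<Longrightarrow> b < length (hist s) \<Longrightarrow>
   hist s ! a = PrimInv i c pk \<Longrightarrow> hist s ! b = PrimInv i c' pk' \<Longrightarrow> a = b"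
  using distinct_map_filter_nth_eq[of inv_id "hist s" a b i] by (auto simp: wf_history_def)

lemma op_resp_index_unique:
  "wf_history s \<Longrightarrow> a < length (hist s) \<Longrightarrow> b < length (hist s) \<Longrightarrow>
   hist s ! a = OpResp w \<Longrightarrow> hist s ! b = OpResp w \<Longrightarrow> a = b"
  using distinct_map_filter_nth_eq[of op_resp_id "hist s" a b w] by (auto simp: wf_history_def)

section \<open>Tags of write operations\<close>

lemma put_phase_step:
  assumes "prot_step s s'" "ph s c = PD oi i t v S A"
  shows "(\<exists>S' A'. ph s' c = PD oi i t v S' A') \<or> hist s' = hist s @ [PrimResp i RAck, OpResp oi]"
  using assms
proof (cases rule: step.cases)
  case (client_recv j c' pl)
  then show ?thesis using assms(2) by (cases pl) (auto simp: crecv_def)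
next
  case (end_put c' oi' i' t' v' S' A' Q)
  then show ?thesis using assms(2) by (cases "c' = c") auto
next
  case (send_put c' oi' i' t' v' S' A' j)
  then show ?thesis using assms(2) by (cases "c' = c") auto
qed (use assms(2) in auto)

definition write_tag :: "('p,'c,'v,'e) gstate \<Rightarrow> nat \<Rightarrow> 'c tag \<Rightarrow> bool" where
  "write_tag s w t \<longleftrightarrow> (\<exists>c. OpInv w c WriteOp \<in> set (hist s) \<and>
     ((\<exists>i v S A. ph s c = PD w i t v S A) \<or>
      (\<exists>n i v. Suc n < length (hist s) \<and> hist s ! n = PrimResp i RAck \<and> hist s ! Suc n = OpResp w \<and>
               PrimInv i c (PutData t v) \<in> set (hist s))))"

lemma write_tag_completedI:
  assumes "OpInv w c WriteOp \<in> set h" "Suc n < length h" "h ! n = PrimResp i RAck"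
    "h ! Suc n = OpResp w"
    "PrimInv i c (PutData t v) \<in> set h" "hist s = h @ E"
  shows "write_tag s w t"
  using assms unfolding write_tag_def
  by (intro exI[of _ c] conjI disjI2 exI[of _ n] exI[of _ i] exI[of _ v]) (auto simp: nth_append)

lemma write_tag_completedD:
  assumes "wf_history s" "write_tag s w t" "OpResp w \<in> set (hist s)"
  shows "\<exists>n i c v. Suc n < length (hist s) \<and> hist s ! n = PrimResp i RAck \<and>
           hist s ! Suc n = OpResp w \<and> PrimInv i c (PutData t v) \<in> set (hist s)"
proof -
  have "ph s c \<noteq> PD w i t v S A" for c i v S A
    using phase_logged_state[OF assms(1), of c] assms(3) by auto
  then show ?thesis using assms(2) unfolding write_tag_def by blast
qed

lemma write_tag_step:
  assumes "wf_history s" "prot_step s s'" "write_tag s w t"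
  shows "write_tag s' w t"
proof -
  obtain E where E: "hist s' = hist s @ E" using step_hist_extends[OF assms(2)] by blast
  obtain c where c: "OpInv w c WriteOp \<in> set (hist s)"
    "(\<exists>i v S A. ph s c = PD w i t v S A) \<or>
      (\<exists>n i v. Suc n < length (hist s) \<and> hist s ! n = PrimResp i RAck \<and> hist s ! Suc n = OpResp w \<and>
               PrimInv i c (PutData t v) \<in> set (hist s))"
    using assms(3) unfolding write_tag_def by blast
  from c(2) show ?thesis
  proof (elim disjE exE conjE)
    fix i v S A assume PD: "ph s c = PD w i t v S A"
    then have "PrimInv i c (PutData t v) \<in> set (hist s)"
      using phase_logged_state[OF assms(1), of c] by simp
    with put_phase_step[OF assms(2) PD] show ?thesis
    proof (elim disjE exE)
      fix S' A' assume "ph s' c = PD w i t v S' A'"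
      then show ?thesis using c(1) E unfolding write_tag_def by auto
    next
      assume "hist s' = hist s @ [PrimResp i RAck, OpResp w]"
      then show ?thesis using c(1) \<open>PrimInv i c (PutData t v) \<in> set (hist s)\<close>
        by (intro write_tag_completedI[where h = "hist s'" and n = "length (hist s)" and E = "[]"])
          (auto simp: nth_append)
    qed
  qed (use c(1) E in \<open>auto intro: write_tag_completedI\<close>)
qed

lemma write_tag_unique:
  assumes wf: "wf_history s" and "write_tag s w t1" "write_tag s w t2"
  shows "t1 = t2"
proof (cases "OpResp w \<in> set (hist s)")
  case True
  then obtain n1 i1 c1 v1 n2 i2 c2 v2 where
    n1: "Suc n1 < length (hist s)" "hist s ! n1 = PrimResp i1 RAck" "hist s ! Suc n1 = OpResp w"
    and p1: "PrimInv i1 c1 (PutData t1 v1) \<in> set (hist s)"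
    and n2: "Suc n2 < length (hist s)" "hist s ! n2 = PrimResp i2 RAck" "hist s ! Suc n2 = OpResp w"
    and p2: "PrimInv i2 c2 (PutData t2 v2) \<in> set (hist s)"
    using write_tag_completedD[OF wf assms(2)] write_tag_completedD[OF wf assms(3)] by metis
  have "n1 = n2" using op_resp_index_unique[OF wf n1(1) n2(1) n1(3) n2(3)] by simp
  then have "i2 = i1" using n1(2) n2(2) by simp
  then show ?thesis using prim_inv_unique[OF wf p1 p2[unfolded \<open>i2 = i1\<close>]] by simp
next
  case False
  have pending: "\<exists>c i v S A. OpInv w c WriteOp \<in> set (hist s) \<and> ph s c = PD w i t v S A"
    if "write_tag s w t" for t
    using that False unfolding write_tag_def by (metis nth_mem)
  obtain c1 c2 i1 v1 S1 A1 i2 v2 S2 A2 where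
    "OpInv w c1 WriteOp \<in> set (hist s)" "ph s c1 = PD w i1 t1 v1 S1 A1"
    "OpInv w c2 WriteOp \<in> set (hist s)" "ph s c2 = PD w i2 t2 v2 S2 A2"
    using pending[OF assms(2)] pending[OF assms(3)] by blast
  then show ?thesis using op_inv_unique[OF wf] by fastforce
qed

definition tag_valid :: "('p,'c,'v,'e) gstate \<Rightarrow> 'c tag \<Rightarrow> bool" where
  "tag_valid s t \<longleftrightarrow> t0 \<le> t \<and> (t = t0 \<or> (\<exists>w. write_tag s w t))"

lemma tag_valid_step: "wf_history s \<Longrightarrow> prot_step s s' \<Longrightarrow> tag_valid s t \<Longrightarrow> tag_valid s' t"
  unfolding tag_valid_def using write_tag_step by blast

section \<open>Signed data\<close>

definition tag_replies :: "('p,'c,'v,'e) gstate \<Rightarrow> 'p \<Rightarrow> nat \<Rightarrow> ('c,'e) item set" where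
  "tag_replies s j i = {x. (\<exists>c. (Fx j, Cl c, TagRep i x) \<in> net s) \<or>
                           (\<exists>c oi v R. ph s c = GT oi i v R \<and> R j = Some x)}"

definition data_replies :: "('p,'c,'v,'e) gstate \<Rightarrow> 'p \<Rightarrow> nat \<Rightarrow> ('c,'e) item set set" where
  "data_replies s j i = {X. (\<exists>c. (Fx j, Cl c, DataRep i X) \<in> net s) \<or>
                            (\<exists>c oi R. ph s c = GD oi i R \<and> R j = Some X)}"

lemma tag_replies_step:
  assumes "prot_step s s'" "x \<in> tag_replies s' j i" "j \<notin> B"
  shows "x \<in> tag_replies s j i \<or> (x \<in> lst s j \<and> (\<forall>y\<in>lst s j. fst y \<le> fst x))"
  using assms(1)
proof (cases rule: step.cases)
  case (client_recv j' c pl)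
  show ?thesis
  proof (cases "\<exists>c'. (Fx j, Cl c', TagRep i x) \<in> net s'")
    case True
    then show ?thesis using client_recv(1) by (auto simp: tag_replies_def)
  next
    case False
    then obtain c' oi v R' where R': "ph s' c' = GT oi i v R'" "R' j = Some x"
      using assms(2) by (auto simp: tag_replies_def)
    show ?thesis
    proof (cases "c' = c")
      case True
      then obtain R where "ph s c = GT oi i v R"
        "R' = R \<or> (\<exists>x'. pl = TagRep i x' \<and> R' = R(j' \<mapsto> x'))"
        using crecv_GT[of "ph s c" j' pl oi i v R'] R'(1) client_recv(1) by auto
      then show ?thesis using R'(2) client_recv(2) unfolding tag_replies_def
        by (cases "j' = j") auto
    qed (use R' client_recv(1) in \<open>auto simp: tag_replies_def\<close>)
  qed
qed (use assms in \<open>auto simp: tag_replies_def split: if_splits\<close>)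

lemma data_replies_step:
  assumes "prot_step s s'" "X \<in> data_replies s' j i" "j \<notin> B"
  shows "X \<in> data_replies s j i \<or> X = lst s j"
  using assms(1)
proof (cases rule: step.cases)
  case (client_recv j' c pl)
  show ?thesis
  proof (cases "\<exists>c'. (Fx j, Cl c', DataRep i X) \<in> net s'")
    case True
    then show ?thesis using client_recv(1) by (auto simp: data_replies_def)
  next
    case False
    then obtain c' oi R' where R': "ph s' c' = GD oi i R'" "R' j = Some X"
      using assms(2) by (auto simp: data_replies_def)
    show ?thesis
    proof (cases "c' = c")
      case True
      then obtain R where "ph s c = GD oi i R"
        "R' = R \<or> (\<exists>X'. pl = DataRep i X' \<and> R' = R(j' \<mapsto> X'))"
        using crecv_GD[of "ph s c" j' pl oi i R'] R'(1) client_recv(1) by auto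
      then show ?thesis using R'(2) client_recv(2) unfolding data_replies_def
        by (cases "j' = j") auto
    qed (use R' client_recv(1) in \<open>auto simp: data_replies_def\<close>)
  qed
qed (use assms in \<open>auto simp: data_replies_def split: if_splits\<close>)

lemma tag_reply_id_less:
  assumes "wf_history s" "x \<in> tag_replies s j i" "j \<notin> B"
  shows "i < ctr s"
proof -
  have "PrimInv i c GetTag \<in> set (hist s)" if "ph s c = GT oi i v R" for c oi v R
    using phase_logged_state[OF assms(1), of c] that by simp
  then show ?thesis using assms unfolding wf_history_def ids_fresh_def tag_replies_def by force
qed

lemma data_reply_id_less:
  assumes "wf_history s" "X \<in> data_replies s j i" "j \<notin> B"
  shows "i < ctr s"
proof -
  have "PrimInv i c GetData \<in> set (hist s)" if "ph s c = GD oi i R" for c oi R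
    using phase_logged_state[OF assms(1), of c] that by (auto dest: nth_mem)
  then show ?thesis using assms unfolding wf_history_def ids_fresh_def data_replies_def by force
qed

definition sig_inv :: "('p,'c,'v,'e) gstate \<Rightarrow> bool" where
  "sig_inv s \<longleftrightarrow> finite (signed s) \<and> (\<forall>x\<in>signed s. tag_valid s (fst x)) \<and>
    (\<forall>i c t v. PrimInv i c (PutData t v) \<in> set (hist s) \<longrightarrow> t0 \<le> t) \<and>
    (\<forall>c oi i t v S A. ph s c = PD oi i t v S A \<longrightarrow> tag_valid s t) \<and>
    (\<forall>j\<in>C. finite (lst s j) \<and> inj_on fst (lst s j) \<and> lst s j \<subseteq> signed s) \<and>
    (\<forall>j\<in>C - B. \<forall>i. tag_replies s j i \<subseteq> signed s \<and> (\<forall>X\<in>data_replies s j i. X \<subseteq> signed s)) \<and>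
    (\<forall>c j i x. (Cl c, Fx j, PutReq i x) \<in> net s \<longrightarrow>
       x \<in> signed s \<and> (\<exists>v. PrimInv i c (PutData (fst x) v) \<in> set (hist s)))"

lemma sig_inv_init: "sig_inv (init_state C enc t0 v0)"
proof -
  have "{(t0, enc v0 j, None) | j. j \<in> C} = (\<lambda>j. (t0, enc v0 j, None)) ` C" by auto
  then have "finite (signed (init_state C enc t0 v0))" using finite_C by (simp add: init_state_def)
  then show ?thesis unfolding sig_inv_def
    by (simp add: init_state_def tag_valid_def tag_replies_def data_replies_def) auto
qed

lemma sig_inv_tagsD:
  assumes "sig_inv s"
  shows "finite (signed s)" "\<And>x. x \<in> signed s \<Longrightarrow> tag_valid s (fst x)"
    "\<And>i c t v. PrimInv i c (PutData t v) \<in> set (hist s) \<Longrightarrow> t0 \<le> t"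
    "\<And>c oi i t v S A. ph s c = PD oi i t v S A \<Longrightarrow> tag_valid s t"
  using assms unfolding sig_inv_def by (elim conjE; fast)+

lemma sig_inv_listsD:
  assumes "sig_inv s" "j \<in> C"
  shows "finite (lst s j)" "inj_on fst (lst s j)" "lst s j \<subseteq> signed s"
  using assms by (simp_all add: sig_inv_def)

lemma sig_inv_repliesD:
  assumes "sig_inv s" "j \<in> C" "j \<notin> B"
  shows "tag_replies s j i \<subseteq> signed s" "X \<in> data_replies s j i \<Longrightarrow> X \<subseteq> signed s"
  using assms by (simp_all add: sig_inv_def)

lemma sig_inv_put_requestD:
  assumes "sig_inv s" "(Cl c, Fx j, PutReq i x) \<in> net s"
  shows "x \<in> signed s \<and> (\<exists>v. PrimInv i c (PutData (fst x) v) \<in> set (hist s))"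
  using assms unfolding sig_inv_def by blast

lemma signed_mono: "prot_step s s' \<Longrightarrow> signed s \<subseteq> signed s'"
  by (cases rule: step.cases) auto

lemma threshold_tags_subset:
  "{t. k \<le> card {j \<in> Q. \<exists>e \<sigma>. (t, e, \<sigma>) \<in> the (R j) \<inter> X}} \<subseteq> fst ` X"
proof
  fix t assume "t \<in> {t. k \<le> card {j \<in> Q. \<exists>e \<sigma>. (t, e, \<sigma>) \<in> the (R j) \<inter> X}}"
  then have "card {j \<in> Q. \<exists>e \<sigma>. (t, e, \<sigma>) \<in> the (R j) \<inter> X} \<noteq> 0" using k_pos by simp
  then have "{j \<in> Q. \<exists>e \<sigma>. (t, e, \<sigma>) \<in> the (R j) \<inter> X} \<noteq> {}" by (metis card.empty)
  then obtain e \<sigma> where "(t, e, \<sigma>) \<in> X" by blast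
  then show "t \<in> fst ` X" by force
qed

lemma signed_tags_step:
  assumes "wf_history s" "sig_inv s" "prot_step s s'"
  shows "finite (signed s') \<and> (\<forall>x\<in>signed s'. tag_valid s' (fst x)) \<and>
    (\<forall>i c t v. PrimInv i c (PutData t v) \<in> set (hist s') \<longrightarrow> t0 \<le> t) \<and>
    (\<forall>c oi i t v S A. ph s' c = PD oi i t v S A \<longrightarrow> tag_valid s' t)"
proof -
  note fin = sig_inv_tagsD(1)[OF assms(2)] and sg = sig_inv_tagsD(2)[OF assms(2)]
    and put = sig_inv_tagsD(3)[OF assms(2)] and pd = sig_inv_tagsD(4)[OF assms(2)]
  have tv: "\<And>t. tag_valid s t \<Longrightarrow> tag_valid s' t" using tag_valid_step[OF assms(1,3)] .
  have max_valid: "tag_valid s (Max T)" if "T \<subseteq> fst ` signed s" "T \<noteq> {}" for T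
    using Max_in[OF finite_subset[OF that(1)] that(2)] that(1) fin sg by force
  from assms(3) show ?thesis
  proof (cases rule: step.cases)
    case (client_recv j c pl)
    then show ?thesis using fin sg put pd tv by (auto dest!: crecv_PD split: if_splits)
  next
    case (end_gettag c oi i v R Q T)
    let ?t = "(Suc (fst (Max T)), c)"
    have "T \<subseteq> fst ` signed s" using end_gettag(5) by force
    then have "t0 \<le> Max T" using max_valid end_gettag(6) by (simp add: tag_valid_def)
    moreover have "Max T < ?t" by (simp add: less_prod_def)
    ultimately have "t0 \<le> ?t" by simp
    moreover have "OpInv oi c WriteOp \<in> set (hist s)"
      using phase_logged_state[OF assms(1), of c] end_gettag(2) by simp
    then have "write_tag s' oi ?t" using end_gettag(1) unfolding write_tag_def by auto
    ultimately have "tag_valid s' ?t" by (auto simp: tag_valid_def)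
    then show ?thesis using end_gettag(1) fin sg put pd tv \<open>t0 \<le> ?t\<close> by auto
  next
    case (end_getdata c oi i R Q L T w)
    have "T \<subseteq> fst ` signed s" using threshold_tags_subset end_getdata(5,6) by simp
    then have "tag_valid s (Max T)" using max_valid end_getdata(7) by blast
    then have "tag_valid s' (Max T)" "t0 \<le> Max T" using tv by (auto simp: tag_valid_def)
    then show ?thesis using end_getdata(1) fin sg put pd tv by auto
  qed (use fin sg put pd tv in auto)
qed

lemma lists_wf_step:
  assumes "sig_inv s" "prot_step s s'" "j \<in> C"
  shows "finite (lst s' j) \<and> inj_on fst (lst s' j) \<and> lst s' j \<subseteq> signed s'"
proof -
  have L: "finite (lst s j) \<and> inj_on fst (lst s j) \<and> lst s j \<subseteq> signed s"
    using sig_inv_listsD[OF assms(1,3)] by blast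
  from assms(2) show ?thesis
  proof (cases rule: step.cases)
    case (node_put j' src i x)
    then show ?thesis using L add_entry_subset[of \<delta> "lst s j" x]
      by (auto intro: finite_subset inj_on_fst_add_entry)
  qed (use L signed_mono[OF assms(2)] in auto)
qed

lemma replies_signed_step:
  assumes "sig_inv s" "prot_step s s'" "j \<in> C" "j \<notin> B"
  shows "tag_replies s' j i \<subseteq> signed s' \<and> (\<forall>X\<in>data_replies s' j i. X \<subseteq> signed s')"
proof -
  have old: "tag_replies s j i \<union> \<Union>(data_replies s j i) \<union> lst s j \<subseteq> signed s'"
    using sig_inv_repliesD[OF assms(1,3,4)] sig_inv_listsD(3)[OF assms(1,3)] signed_mono[OF assms(2)]
    by blast
  show ?thesis
    using tag_replies_step[OF assms(2) _ assms(4)] data_replies_step[OF assms(2) _ assms(4)] old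
    by blast
qed

lemma put_request_source:
  assumes "prot_step s s'" "(Cl c, Fx j, PutReq i x) \<in> net s'"
  shows "(Cl c, Fx j, PutReq i x) \<in> net s \<or>
    (\<exists>oi t v S A. ph s c = PD oi i t v S A \<and> x = (t, enc v j, Some c) \<and> x \<in> signed s')"
  using assms by (cases rule: step.cases) auto

lemma put_requests_step:
  assumes "wf_history s" "sig_inv s" "prot_step s s'" "(Cl c, Fx j, PutReq i x) \<in> net s'"
  shows "x \<in> signed s' \<and> (\<exists>v. PrimInv i c (PutData (fst x) v) \<in> set (hist s'))"
proof -
  obtain E where E: "hist s' = hist s @ E" using step_hist_extends[OF assms(3)] by blast
  from put_request_source[OF assms(3,4)] show ?thesis
  proof (elim disjE exE conjE)
    assume "(Cl c, Fx j, PutReq i x) \<in> net s"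
    then show ?thesis using sig_inv_put_requestD[OF assms(2)] signed_mono[OF assms(3)] E by fastforce
  next
    fix oi t v S A assume "ph s c = PD oi i t v S A" "x = (t, enc v j, Some c)" "x \<in> signed s'"
    moreover from this(1) have "PrimInv i c (PutData t v) \<in> set (hist s)"
      using phase_logged_state[OF assms(1), of c] by simp
    ultimately show ?thesis using E by auto
  qed
qed

lemma sig_inv_step:
  assumes "wf_history s" "sig_inv s" "prot_step s s'"
  shows "sig_inv s'"
proof -
  have "\<forall>j\<in>C. finite (lst s' j) \<and> inj_on fst (lst s' j) \<and> lst s' j \<subseteq> signed s'"
    using lists_wf_step[OF assms(2,3)] by blast
  moreover have "\<forall>j\<in>C - B. \<forall>i. tag_replies s' j i \<subseteq> signed s' \<and> (\<forall>X\<in>data_replies s' j i. X \<subseteq> signed s')"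
    using replies_signed_step[OF assms(2,3)] by blast
  moreover have "\<forall>c j i x. (Cl c, Fx j, PutReq i x) \<in> net s' \<longrightarrow>
      x \<in> signed s' \<and> (\<exists>v. PrimInv i c (PutData (fst x) v) \<in> set (hist s'))"
    using put_requests_step[OF assms] by blast
  ultimately show ?thesis using signed_tags_step[OF assms] unfolding sig_inv_def
    by (elim conjE) (intro conjI; assumption)
qed

section \<open>Completed put-data primitives\<close>

definition invoked_after :: "('c,'v) event list \<Rightarrow> nat \<Rightarrow> nat \<Rightarrow> bool" where
  "invoked_after h n i \<longleftrightarrow> (\<exists>m c pk. n < m \<and> m < length h \<and> h ! m = PrimInv i c pk)"

lemma invoked_after_step_back:
  assumes "prot_step s s'" "invoked_after (hist s') n i" "i < ctr s"
  shows "invoked_after (hist s) n i"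
proof -
  obtain E where E: "hist s' = hist s @ E" "\<forall>i c pk. PrimInv i c pk \<in> set E \<longrightarrow> ctr s \<le> i"
    using step_hist_extends[OF assms(1)] by blast
  obtain m c pk where m: "n < m" "m < length (hist s')" "hist s' ! m = PrimInv i c pk"
    using assms(2) unfolding invoked_after_def by blast
  have "m < length (hist s)"
  proof (rule ccontr)
    assume "\<not> m < length (hist s)"
    then have "PrimInv i c pk \<in> set E" using m(2,3) E(1)
      by (metis add_diff_inverse_nat length_append nat_add_left_cancel_less nth_append nth_mem)
    then show False using E(2) assms(3) by fastforce
  qed
  then show ?thesis using m E(1) unfolding invoked_after_def by (auto simp: nth_append)
qed

(* Replies to primitives invoked before position n may predate the put-data. *)
definition retains :: "('p,'c,'v,'e) gstate \<Rightarrow> nat \<Rightarrow> 'c tag \<Rightarrow> 'p \<Rightarrow> bool" where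
  "retains s n t j \<longleftrightarrow> covers \<delta> (fst ` lst s j) t \<and>
     (\<forall>i. invoked_after (hist s) n i \<longrightarrow>
        (\<forall>x\<in>tag_replies s j i. t \<le> fst x) \<and> (\<forall>X\<in>data_replies s j i. covers \<delta> (fst ` X) t))"

lemma lst_covers_step:
  assumes "sig_inv s" "prot_step s s'" "j \<in> C" "covers \<delta> (fst ` lst s j) t"
  shows "covers \<delta> (fst ` lst s' j) t"
  using assms(2)
proof (cases rule: step.cases)
  case (node_put j' src i x)
  then show ?thesis
    using assms(4) covers_add_entry[of "lst s j" \<delta> t x] sig_inv_listsD[OF assms(1,3)] by auto
qed (use assms(4) in auto)

lemma retains_step:
  assumes "wf_history s" "sig_inv s" "prot_step s s'" "j \<in> C" "j \<notin> B" "retains s n t j"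
  shows "retains s' n t j"
  unfolding retains_def
proof (intro conjI allI impI ballI)
  have cov: "covers \<delta> (fst ` lst s j) t" using assms(6) by (simp add: retains_def)
  then show "covers \<delta> (fst ` lst s' j) t" using lst_covers_step[OF assms(2-4)] by blast
  fix i assume ia: "invoked_after (hist s') n i"
  have old: "invoked_after (hist s) n i" if "i < ctr s"
    using invoked_after_step_back[OF assms(3) ia that] .
  {
    fix x assume "x \<in> tag_replies s' j i"
    from tag_replies_step[OF assms(3) this assms(5)] show "t \<le> fst x"
    proof
      assume "x \<in> tag_replies s j i"
      then show ?thesis using assms(6) old tag_reply_id_less[OF assms(1) _ assms(5)]
        unfolding retains_def by blast
    next
      assume x: "x \<in> lst s j \<and> (\<forall>y\<in>lst s j. fst y \<le> fst x)"
      obtain t' where "t' \<in> fst ` lst s j" "t \<le> t'" using covers_obtain_ge[OF cov] .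
      then show ?thesis using x by (auto intro: order_trans)
    qed
  }
  fix X assume "X \<in> data_replies s' j i"
  from data_replies_step[OF assms(3) this assms(5)] show "covers \<delta> (fst ` X) t"
  proof
    assume "X \<in> data_replies s j i"
    then show ?thesis using assms(6) old data_reply_id_less[OF assms(1) _ assms(5)]
      unfolding retains_def by blast
  qed (use cov in simp)
qed

definition ack_inv :: "('p,'c,'v,'e) gstate \<Rightarrow> bool" where
  "ack_inv s \<longleftrightarrow>
    (\<forall>c j i. j \<in> C \<longrightarrow> j \<notin> B \<longrightarrow> (Fx j, Cl c, PutAck i) \<in> net s \<longrightarrow>
       (\<exists>t v. PrimInv i c (PutData t v) \<in> set (hist s) \<and> covers \<delta> (fst ` lst s j) t)) \<and>
    (\<forall>c oi i t v S A j. ph s c = PD oi i t v S A \<longrightarrow> j \<in> A \<longrightarrow> j \<in> C \<longrightarrow> j \<notin> B \<longrightarrow>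
       covers \<delta> (fst ` lst s j) t) \<and>
    (\<forall>n i. n < length (hist s) \<longrightarrow> hist s ! n = PrimResp i RAck \<longrightarrow>
       (\<exists>t v c QA. PrimInv i c (PutData t v) \<in> set (hist s) \<and> is_quorum C k QA \<and>
          (\<forall>j\<in>QA - B. retains s n t j)))"

lemma ack_inv_init: "ack_inv (init_state C enc t0 v0)"
  by (simp add: ack_inv_def init_state_def)

lemma ack_invD:
  assumes "ack_inv s"
  shows "j \<in> C \<Longrightarrow> j \<notin> B \<Longrightarrow> (Fx j, Cl c, PutAck i) \<in> net s \<Longrightarrow>
      \<exists>t v. PrimInv i c (PutData t v) \<in> set (hist s) \<and> covers \<delta> (fst ` lst s j) t"
    and "ph s c = PD oi i t v S A \<Longrightarrow> j \<in> A \<Longrightarrow> j \<in> C \<Longrightarrow> j \<notin> B \<Longrightarrow>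
      covers \<delta> (fst ` lst s j) t"
    and "n < length (hist s) \<Longrightarrow> hist s ! n = PrimResp i RAck \<Longrightarrow>
      \<exists>t v c QA. PrimInv i c (PutData t v) \<in> set (hist s) \<and> is_quorum C k QA \<and>
        (\<forall>j\<in>QA - B. retains s n t j)"
  using assms unfolding ack_inv_def by blast+

lemma put_ack_source:
  assumes "prot_step s s'" "(Fx j, Cl c, PutAck i) \<in> net s'" "j \<notin> B"
  shows "(Fx j, Cl c, PutAck i) \<in> net s \<or>
    (\<exists>x. (Cl c, Fx j, PutReq i x) \<in> net s \<and>
       lst s' j = (if x \<in> signed s then add_entry \<delta> (lst s j) x else lst s j))"
  using assms by (cases rule: step.cases) auto

lemma put_phase_acks_source:
  assumes "prot_step s s'" "ph s' c = PD oi i t v S' A'" "j \<in> A'"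
  shows "\<exists>S A. ph s c = PD oi i t v S A \<and> (j \<in> A \<or> (Fx j, Cl c, PutAck i) \<in> net s)"
  using assms
proof (cases rule: step.cases)
  case (client_recv j' c' pl)
  then show ?thesis using assms(2,3) by (cases pl) (auto simp: crecv_def split: if_splits phase.splits)
qed (auto split: if_splits)

lemma put_acks_step:
  assumes "wf_history s" "sig_inv s" "ack_inv s" "prot_step s s'" "j \<in> C" "j \<notin> B"
    "(Fx j, Cl c, PutAck i) \<in> net s'"
  shows "\<exists>t v. PrimInv i c (PutData t v) \<in> set (hist s') \<and> covers \<delta> (fst ` lst s' j) t"
proof -
  obtain E where E: "hist s' = hist s @ E" using step_hist_extends[OF assms(4)] by blast
  from put_ack_source[OF assms(4,7,6)] show ?thesis
  proof (elim disjE exE conjE)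
    assume "(Fx j, Cl c, PutAck i) \<in> net s"
    then obtain t v where "PrimInv i c (PutData t v) \<in> set (hist s)" "covers \<delta> (fst ` lst s j) t"
      using ack_invD(1)[OF assms(3,5,6)] by blast
    moreover from this(2) have "covers \<delta> (fst ` lst s' j) t" by (rule lst_covers_step[OF assms(2,4,5)])
    ultimately show ?thesis using E by (intro exI[of _ t] exI[of _ v]) auto
  next
    fix x assume x: "(Cl c, Fx j, PutReq i x) \<in> net s"
      "lst s' j = (if x \<in> signed s then add_entry \<delta> (lst s j) x else lst s j)"
    then obtain v where "x \<in> signed s" "PrimInv i c (PutData (fst x) v) \<in> set (hist s)"
      using sig_inv_put_requestD[OF assms(2)] by blast
    moreover have "covers \<delta> (fst ` lst s' j) (fst x)"
      using x(2) \<open>x \<in> signed s\<close> covers_add_entry[of "lst s j" \<delta> "fst x" x]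
        sig_inv_listsD[OF assms(2,5)] by simp
    ultimately show ?thesis using E by (intro exI[of _ "fst x"] exI[of _ v]) auto
  qed
qed

lemma put_phase_acks_step:
  assumes "wf_history s" "sig_inv s" "ack_inv s" "prot_step s s'"
    "ph s' c = PD oi i t v S' A'" "j \<in> A'" "j \<in> C" "j \<notin> B"
  shows "covers \<delta> (fst ` lst s' j) t"
proof -
  obtain S A where PD: "ph s c = PD oi i t v S A" and src: "j \<in> A \<or> (Fx j, Cl c, PutAck i) \<in> net s"
    using put_phase_acks_source[OF assms(4-6)] by blast
  from src have "covers \<delta> (fst ` lst s j) t"
  proof
    assume "(Fx j, Cl c, PutAck i) \<in> net s"
    then obtain t' v' where t': "PrimInv i c (PutData t' v') \<in> set (hist s)"
      "covers \<delta> (fst ` lst s j) t'"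
      using ack_invD(1)[OF assms(3,7,8)] by blast
    have "PrimInv i c (PutData t v) \<in> set (hist s)"
      using phase_logged_state[OF assms(1), of c] PD by simp
    then have "t = t'" using prim_inv_unique[OF assms(1) t'(1)] by blast
    then show ?thesis using t'(2) by simp
  qed (use ack_invD(2)[OF assms(3) PD _ assms(7,8)] in blast)
  then show ?thesis using lst_covers_step[OF assms(2,4,7)] by blast
qed

lemma new_put_response:
  assumes "prot_step s s'" "length (hist s) \<le> n" "n < length (hist s')" "hist s' ! n = PrimResp i RAck"
  shows "\<exists>c oi t v S A Q. ph s c = PD oi i t v S A \<and> is_quorum C k Q \<and> Q \<subseteq> A \<and>
     hist s' = hist s @ [PrimResp i RAck, OpResp oi] \<and> n = length (hist s) \<and> lst s' = lst s"
  using assms(1)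
proof (cases rule: step.cases)
  case (end_put c oi i' t v S A Q)
  then have "n = length (hist s)" "i' = i"
    using assms(2-4) by (auto simp: nth_append less_Suc_eq split: if_splits)
  then show ?thesis using end_put
    by (intro exI[of _ c] exI[of _ oi] exI[of _ t] exI[of _ v] exI[of _ S] exI[of _ A] exI[of _ Q]) simp
qed (use assms(2-4) in \<open>auto simp: nth_append less_Suc_eq split: if_splits\<close>)

lemma completed_puts_step:
  assumes "wf_history s" "sig_inv s" "ack_inv s" "prot_step s s'"
    "n < length (hist s')" "hist s' ! n = PrimResp i RAck"
  shows "\<exists>t v c QA. PrimInv i c (PutData t v) \<in> set (hist s') \<and> is_quorum C k QA \<and>
           (\<forall>j\<in>QA - B. retains s' n t j)"
proof -
  obtain E where E: "hist s' = hist s @ E" using step_hist_extends[OF assms(4)] by blast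
  show ?thesis
  proof (cases "n < length (hist s)")
    case True
    then have "hist s ! n = PrimResp i RAck" using assms(6) E by (simp add: nth_append)
    then obtain t v c QA where "PrimInv i c (PutData t v) \<in> set (hist s)" and QA: "is_quorum C k QA"
        and ret: "\<forall>j\<in>QA - B. retains s n t j"
      using ack_invD(3)[OF assms(3) True] by blast
    moreover have "retains s' n t j" if "j \<in> QA - B" for j
      using retains_step[OF assms(1,2,4)] ret that QA unfolding is_quorum_def by blast
    ultimately show ?thesis using E by (intro exI[of _ t] exI[of _ v] exI[of _ c] exI[of _ QA]) auto
  next
    case False
    then obtain c oi t v S A Q where PD: "ph s c = PD oi i t v S A" and Q: "is_quorum C k Q" "Q \<subseteq> A"
      and h: "hist s' = hist s @ [PrimResp i RAck, OpResp oi]" "n = length (hist s)" "lst s' = lst s"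
      using new_put_response[OF assms(4) _ assms(5,6)] by auto
    have "\<not> invoked_after (hist s') n i'" for i'
      using h(1,2) by (auto simp: invoked_after_def nth_append less_Suc_eq)
    moreover have "covers \<delta> (fst ` lst s' j) t" if "j \<in> Q - B" for j
    proof -
      from that Q have "j \<in> A" "j \<in> C" "j \<notin> B" by (auto simp: is_quorum_def)
      then show ?thesis using ack_invD(2)[OF assms(3) PD] h(3) by simp
    qed
    moreover have "PrimInv i c (PutData t v) \<in> set (hist s)"
      using phase_logged_state[OF assms(1), of c] PD by simp
    ultimately show ?thesis using Q(1) h(1) unfolding retains_def
      by (intro exI[of _ t] exI[of _ v] exI[of _ c] exI[of _ Q]) simp
  qed
qed

lemma ack_inv_step:
  assumes "wf_history s" "sig_inv s" "ack_inv s" "prot_step s s'"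
  shows "ack_inv s'"
  unfolding ack_inv_def
proof (intro conjI allI impI)
  fix c j i assume "j \<in> C" "j \<notin> B" "(Fx j, Cl c, PutAck i) \<in> net s'"
  then show "\<exists>t v. PrimInv i c (PutData t v) \<in> set (hist s') \<and> covers \<delta> (fst ` lst s' j) t"
    by (rule put_acks_step[OF assms])
next
  fix c oi i t v S A j assume "ph s' c = PD oi i t v S A" "j \<in> A" "j \<in> C" "j \<notin> B"
  then show "covers \<delta> (fst ` lst s' j) t" by (rule put_phase_acks_step[OF assms])
next
  fix n i assume "n < length (hist s')" "hist s' ! n = PrimResp i RAck"
  then show "\<exists>t v c QA. PrimInv i c (PutData t v) \<in> set (hist s') \<and> is_quorum C k QA \<and>
      (\<forall>j\<in>QA - B. retains s' n t j)"
    by (rule completed_puts_step[OF assms])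
qed

lemma reachable_invariants: "reachable s \<Longrightarrow> wf_history s \<and> sig_inv s \<and> ack_inv s"
  by (induction rule: reach.induct)
    (auto intro: wf_history_init sig_inv_init ack_inv_init wf_history_step sig_inv_step ack_inv_step)

section \<open>Writes concurrent with a read\<close>

lemma write_concurrent_with_read:
  assumes wf: "wf_history s"
    and read: "m < length (hist s)" "hist s ! m = OpInv oi c ReadOp" "OpResp oi \<notin> set (hist s)"
    and w: "write_tag s w t" "t \<notin> completed_put_tags (hist s) (Suc m)"
  shows "is_write (hist s) w \<and> concurrent (hist s) w oi"
proof -
  obtain cw where "OpInv w cw WriteOp \<in> set (hist s)" using w(1) unfolding write_tag_def by blast
  then have iw: "is_write (hist s) w" unfolding is_write_def by (metis in_set_conv_nth)
  moreover have "op_invoked (hist s) oi" using read(1,2) unfolding op_invoked_def by blast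
  moreover have "\<not> completes_before (hist s) oi w"
    using read(3) unfolding completes_before_def by (metis nth_mem order.strict_trans)
  moreover have "\<not> completes_before (hist s) w oi"
  proof
    assume "completes_before (hist s) w oi"
    then obtain n' m' c' kd where cb: "n' < m'" "m' < length (hist s)" "hist s ! n' = OpResp w"
      "hist s ! m' = OpInv oi c' kd"
      unfolding completes_before_def by blast
    have "m' = m"
      using distinct_map_filter_nth_eq[of inv_id "hist s" m' m oi] wf cb(2,4) read(1,2)
      by (simp add: wf_history_def)
    have "OpResp w \<in> set (hist s)" using cb(1-3) by (metis nth_mem order.strict_trans)
    then obtain n i c'' v where n: "Suc n < length (hist s)" "hist s ! n = PrimResp i RAck"
      "hist s ! Suc n = OpResp w" "PrimInv i c'' (PutData t v) \<in> set (hist s)"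
      using write_tag_completedD[OF wf w(1)] by blast
    have "Suc n = n'" using op_resp_index_unique[OF wf n(1) _ n(3) cb(3)] cb(1,2) by simp
    then have "t \<in> completed_put_tags (hist s) (Suc m)"
      using n(2,4) cb(1) \<open>m' = m\<close> unfolding completed_put_tags_def
      by (intro CollectI exI[of _ n] exI[of _ i] exI[of _ c''] exI[of _ v]) simp
    then show False using w(2) by blast
  qed
  ultimately show ?thesis unfolding concurrent_def op_invoked_def is_write_def by blast
qed

lemma card_tags_of_concurrent_writes:
  assumes wf: "wf_history s" and "is_read (hist s) r" "writes_conc_bounded \<delta> (hist s)"
    and G: "\<forall>t\<in>G. \<exists>w. write_tag s w t \<and> is_write (hist s) w \<and> concurrent (hist s) w r"
  shows "card G \<le> \<delta>"
proof -
  let ?W = "{w. is_write (hist s) w \<and> concurrent (hist s) w r}"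
  define f where "f t = (SOME w. write_tag s w t \<and> is_write (hist s) w \<and> concurrent (hist s) w r)" for t
  have f: "write_tag s (f t) t \<and> f t \<in> ?W" if "t \<in> G" for t
    using someI_ex[OF G[rule_format, OF that]] unfolding f_def by blast
  have "inj_on f G"
  proof (rule inj_onI)
    fix x y assume "x \<in> G" "y \<in> G" "f x = f y"
    then show "x = y" using f[of x] f[of y] write_tag_unique[OF wf, of "f x" x y] by simp
  qed
  moreover have "f ` G \<subseteq> ?W" using f by blast
  moreover have "finite ?W"
    using finite_op_invoked[of "hist s"] by (rule finite_subset[rotated]) (auto simp: concurrent_def)
  ultimately have "card G \<le> card ?W" by (rule card_inj_on_le)
  also have "\<dots> \<le> \<delta>" using assms(2,3) unfolding writes_conc_bounded_def by blast
  finally show ?thesis .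
qed

lemma latest_completed_tag_in_reply:
  assumes wf: "wf_history s" and sig: "sig_inv s" and bd: "writes_conc_bounded \<delta> (hist s)"
    and read: "m < length (hist s)" "hist s ! m = OpInv oi c ReadOp" "OpResp oi \<notin> set (hist s)"
    and tmax: "\<forall>t\<in>completed_put_tags (hist s) (Suc m). t \<le> tmax" "t0 \<le> tmax"
    and X: "X \<subseteq> signed s" "covers \<delta> (fst ` X) tmax"
  shows "tmax \<in> fst ` X"
proof (rule ccontr)
  assume "tmax \<notin> fst ` X"
  define G where "G = {t \<in> fst ` X. tmax < t}"
  then have "\<delta> + 1 \<le> card G" using X(2) \<open>tmax \<notin> fst ` X\<close> by (simp add: covers_def)
  moreover have "\<exists>w. write_tag s w t \<and> is_write (hist s) w \<and> concurrent (hist s) w oi" if "t \<in> G" for t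
  proof -
    have "tmax < t" "tag_valid s t"
      using that X(1) sig_inv_tagsD(2)[OF sig] unfolding G_def by auto
    then obtain w where "write_tag s w t" using tmax(2) unfolding tag_valid_def by auto
    moreover have "t \<notin> completed_put_tags (hist s) (Suc m)" using tmax(1) \<open>tmax < t\<close> by fastforce
    ultimately show ?thesis using write_concurrent_with_read[OF wf read] by blast
  qed
  moreover have "is_read (hist s) oi" using read(1,2) unfolding is_read_def by blast
  ultimately show False using card_tags_of_concurrent_writes[OF wf _ bd, of oi G] by auto
qed

section \<open>Responses of get-tag and get-data\<close>

lemma reachable_event_source:
  assumes "reachable s" "n < length (hist s)"
  shows "\<exists>s1 s2 E. reachable s1 \<and> prot_step s1 s2 \<and> length (hist s1) \<le> n \<and> n < length (hist s2) \<and>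
           hist s = hist s2 @ E"
  using assms
proof (induction rule: reach.induct)
  case (reach_step s s')
  obtain E where E: "hist s' = hist s @ E" using step_hist_extends[OF reach_step.hyps(2)] by blast
  show ?case
  proof (cases "n < length (hist s)")
    case True
    then show ?thesis using reach_step.IH E by fastforce
  next
    case False
    then show ?thesis using reach_step.hyps reach_step.prems
      by (intro exI[of _ s] exI[of _ s'] exI[of _ "[]"]) auto
  qed
qed (simp add: init_state_def)

lemma new_prim_response:
  assumes "prot_step s s'" "length (hist s) \<le> n" "n < length (hist s')" "hist s' ! n = PrimResp \<pi> r"
  shows "(\<exists>c oi v R Q. ph s c = GT oi \<pi> v R \<and> is_quorum C k Q \<and> Q \<subseteq> dom R \<and>
            r = RTag (Max {fst x | x j. j \<in> Q \<and> R j = Some x \<and> x \<in> signed s})) \<or>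
         (\<exists>c oi R Q w. ph s c = GD oi \<pi> R \<and> is_quorum C k Q \<and> Q \<subseteq> dom R \<and>
            r = RPair (Max {t. k \<le> card {j \<in> Q. \<exists>e \<sigma>. (t, e, \<sigma>) \<in> the (R j) \<inter> signed s}}) w) \<or>
         (\<exists>c oi t v S A. ph s c = PD oi \<pi> t v S A \<and> r = RAck)"
  using assms(1)
proof (cases rule: step.cases)
  case (end_gettag c oi i v R Q T)
  then have "i = \<pi> \<and> r = RTag (Max T)" using assms(2-4) by (auto simp: nth_append less_Suc_eq)
  then show ?thesis using end_gettag(2-5)
    by (intro disjI1 exI[of _ c] exI[of _ oi] exI[of _ v] exI[of _ R] exI[of _ Q]) simp
next
  case (end_getdata c oi i R Q L T w)
  then have "i = \<pi> \<and> r = RPair (Max T) w" using assms(2-4) by (auto simp: nth_append less_Suc_eq)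
  then show ?thesis using end_getdata(2-6)
    by (intro disjI2 disjI1 exI[of _ c] exI[of _ oi] exI[of _ R] exI[of _ Q] exI[of _ w]) simp
next
  case (end_put c oi i t v S A Q)
  then have "i = \<pi> \<and> r = RAck" using assms(2-4) by (auto simp: nth_append less_Suc_eq)
  then show ?thesis using end_put(2) by blast
qed (use assms(2-4) in \<open>auto simp: nth_append less_Suc_eq\<close>)

lemma completed_put_in_prefix:
  assumes wf: "wf_history s" and ack: "ack_inv s1" and h: "hist s = hist s1 @ E"
    and inv: "PrimInv \<pi> c pk' \<in> set (hist s1)"
    and put: "PrimInv \<phi> c1 (PutData t\<phi> v\<phi>) \<in> set (hist s)"
    and prec: "precedes (hist s) (PrimResp \<phi> RAck) (PrimInv \<pi> c2 pk)"
  shows "precedes (hist s1) (PrimResp \<phi> RAck) (PrimInv \<pi> c2 pk) \<and>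
    PrimInv \<phi> c1 (PutData t\<phi> v\<phi>) \<in> set (hist s1) \<and> pk = pk'"
proof -
  obtain a b where ab: "a < b" "b < length (hist s)" "hist s ! a = PrimResp \<phi> RAck"
    "hist s ! b = PrimInv \<pi> c2 pk"
    using prec unfolding precedes_def by blast
  obtain p where p: "p < length (hist s1)" "hist s1 ! p = PrimInv \<pi> c pk'"
    using inv by (metis in_set_conv_nth)
  then have "hist s ! p = PrimInv \<pi> c pk'" using h by (simp add: nth_append)
  then have "b = p" using prim_inv_index_unique[OF wf ab(2) _ ab(4)] p(1) h by simp
  then have "c2 = c" "pk = pk'" using ab(4) \<open>hist s ! p = PrimInv \<pi> c pk'\<close> by auto
  have prec1: "precedes (hist s1) (PrimResp \<phi> RAck) (PrimInv \<pi> c2 pk)"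
    using ab h p \<open>b = p\<close> unfolding precedes_def by (metis nth_append order.strict_trans)
  obtain a' where "a' < length (hist s1)" "hist s1 ! a' = PrimResp \<phi> RAck"
    using prec1 unfolding precedes_def by (meson order.strict_trans)
  then obtain c' t v where "PrimInv \<phi> c' (PutData t v) \<in> set (hist s1)"
    using ack_invD(3)[OF ack] by blast
  then have "PrimInv \<phi> c1 (PutData t\<phi> v\<phi>) \<in> set (hist s1)"
    using prim_inv_unique[OF wf put, of c' "PutData t v"] h by auto
  then show ?thesis using prec1 \<open>pk = pk'\<close> by blast
qed

end

locale byzantine_protocol = protocol +
  assumes B_subset: "B \<subseteq> C" and resilience: "3 * card B + k < card C"
begin

lemma quorums_honest_overlap:
  assumes "is_quorum C k Q1" "is_quorum C k Q2"
  shows "k < card (Q1 \<inter> Q2 - B)"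
proof -
  let ?n = "card C" and ?q = "qsize (card C) k"
  have "real (2 * ?n + k) / 3 \<le> real ?q" unfolding qsize_def by linarith
  then have "real (2 * ?n + k) \<le> real (3 * ?q)" by simp
  then have q3: "2 * ?n + k \<le> 3 * ?q" by (simp only: of_nat_le_iff)
  have c: "card Q1 = ?q" "card Q2 = ?q" "Q1 \<subseteq> C" "Q2 \<subseteq> C" using assms unfolding is_quorum_def by auto
  have f: "finite Q1" "finite Q2" using c finite_C finite_subset by blast+
  have "card (Q1 \<union> Q2) + card (Q1 \<inter> Q2) = card Q1 + card Q2" using card_Un_Int[OF f] by simp
  moreover have "card (Q1 \<union> Q2) \<le> ?n" using c finite_C by (intro card_mono) auto
  moreover have "card (Q1 \<inter> Q2) - card B \<le> card (Q1 \<inter> Q2 - B)"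
    using f B_subset finite_C finite_subset by (intro diff_card_le_card_Diff) auto
  ultimately show ?thesis using c q3 resilience by linarith
qed

lemma get_tag_sound:
  assumes wf: "wf_history s" and sig: "sig_inv s" and ack: "ack_inv s"
    and GT: "ph s c = GT oi \<pi> v R" and Q: "is_quorum C k Q" "Q \<subseteq> dom R"
    and T: "T = {fst x | x j. j \<in> Q \<and> R j = Some x \<and> x \<in> signed s}"
    and put: "PrimInv \<phi> c1 (PutData t\<phi> v\<phi>) \<in> set (hist s)"
    and prec: "precedes (hist s) (PrimResp \<phi> RAck) (PrimInv \<pi> c2 pk)"
  shows "t\<phi> \<le> Max T"
proof -
  obtain a b where ab: "a < b" "b < length (hist s)" "hist s ! a = PrimResp \<phi> RAck"
    "hist s ! b = PrimInv \<pi> c2 pk"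
    using prec unfolding precedes_def by blast
  obtain t v c' QA where QA: "PrimInv \<phi> c' (PutData t v) \<in> set (hist s)" "is_quorum C k QA"
    "\<forall>j\<in>QA - B. retains s a t j"
    using ack_invD(3)[OF ack _ ab(3)] ab(1,2) by auto
  have "t = t\<phi>" using prim_inv_unique[OF wf put QA(1)] by simp
  obtain j where j: "j \<in> Q" "j \<in> QA" "j \<notin> B"
    using quorums_honest_overlap[OF Q(1) QA(2)] by (metis Diff_iff IntE card.empty equals0I not_less0)
  then have "j \<in> C" using Q(1) by (auto simp: is_quorum_def)
  obtain x where x: "R j = Some x" using j(1) Q(2) by blast
  then have "x \<in> tag_replies s j \<pi>" using GT by (auto simp: tag_replies_def)
  moreover have "invoked_after (hist s) a \<pi>" using ab unfolding invoked_after_def by blast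
  ultimately have "t\<phi> \<le> fst x" using QA(3) j(2,3) \<open>t = t\<phi>\<close> unfolding retains_def by blast
  moreover have "x \<in> signed s"
    using sig_inv_repliesD(1)[OF sig \<open>j \<in> C\<close> j(3)] \<open>x \<in> tag_replies s j \<pi>\<close> by blast
  then have "fst x \<in> T" using T j(1) x by blast
  moreover have "T \<subseteq> fst ` signed s" using T by force
  then have "finite T" using sig_inv_tagsD(1)[OF sig] finite_subset by blast
  ultimately show ?thesis by (meson Max_ge order_trans)
qed

lemma get_data_sound:
  assumes wf: "wf_history s" and sig: "sig_inv s" and ack: "ack_inv s"
    and bd: "writes_conc_bounded \<delta> (hist s)"
    and GD: "ph s c = GD oi \<pi> R" and Q: "is_quorum C k Q" "Q \<subseteq> dom R"
    and T: "T = {t. k \<le> card {j \<in> Q. \<exists>e \<sigma>. (t, e, \<sigma>) \<in> the (R j) \<inter> signed s}}"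
    and put: "PrimInv \<phi> c1 (PutData t\<phi> v\<phi>) \<in> set (hist s)"
    and prec: "precedes (hist s) (PrimResp \<phi> RAck) (PrimInv \<pi> c2 pk)"
  shows "t\<phi> \<le> Max T"
proof -
  obtain m where m: "Suc m < length (hist s)" "hist s ! m = OpInv oi c ReadOp"
      "hist s ! Suc m = PrimInv \<pi> c GetData" and nr: "OpResp oi \<notin> set (hist s)"
    using phase_logged_state[OF wf, of c] GD by auto
  obtain a b where ab: "a < b" "b < length (hist s)" "hist s ! a = PrimResp \<phi> RAck"
    "hist s ! b = PrimInv \<pi> c2 pk"
    using prec unfolding precedes_def by blast
  have "b = Suc m" using prim_inv_index_unique[OF wf ab(2) m(1) ab(4) m(3)] .
  then have "t\<phi> \<in> completed_put_tags (hist s) (Suc m)"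
    using ab(1,3) put unfolding completed_put_tags_def by blast
  then obtain a' i' c' v' tmax where "t\<phi> \<le> tmax"
      and Pmax: "\<forall>t\<in>completed_put_tags (hist s) (Suc m). t \<le> tmax"
      and a': "a' < Suc m" "hist s ! a' = PrimResp i' RAck"
        "PrimInv i' c' (PutData tmax v') \<in> set (hist s)"
    by (rule latest_completed_put)
  then have "t0 \<le> tmax" using sig_inv_tagsD(3)[OF sig] by blast
  obtain t v c'' QA where QA: "PrimInv i' c'' (PutData t v) \<in> set (hist s)" "is_quorum C k QA"
      "\<forall>j\<in>QA - B. retains s a' t j"
    using ack_invD(3)[OF ack _ a'(2)] a'(1) m(1) by (meson Suc_lessD less_trans_Suc)
  have "t = tmax" using prim_inv_unique[OF wf a'(3) QA(1)] by simp
  have "invoked_after (hist s) a' \<pi>" using a'(1) m unfolding invoked_after_def by blast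
  have "j \<in> {j \<in> Q. \<exists>e \<sigma>. (tmax, e, \<sigma>) \<in> the (R j) \<inter> signed s}" if j: "j \<in> Q \<inter> QA - B" for j
  proof -
    obtain X where X: "R j = Some X" using j Q(2) by blast
    then have "X \<in> data_replies s j \<pi>" using GD by (auto simp: data_replies_def)
    moreover have "j \<in> C" using j Q(1) by (auto simp: is_quorum_def)
    ultimately have "X \<subseteq> signed s" "covers \<delta> (fst ` X) tmax"
      using sig_inv_repliesD(2)[OF sig] QA(3) j \<open>invoked_after (hist s) a' \<pi>\<close> \<open>t = tmax\<close>
      unfolding retains_def by auto
    then have "tmax \<in> fst ` X"
      using latest_completed_tag_in_reply[OF wf sig bd _ m(2) nr Pmax \<open>t0 \<le> tmax\<close>] m(1) by simp
    then show ?thesis using j X \<open>X \<subseteq> signed s\<close> by force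
  qed
  then have "card (Q \<inter> QA - B) \<le> card {j \<in> Q. \<exists>e \<sigma>. (tmax, e, \<sigma>) \<in> the (R j) \<inter> signed s}"
    using Q(1) finite_C by (intro card_mono) (auto simp: is_quorum_def intro: finite_subset)
  then have "tmax \<in> T" using T quorums_honest_overlap[OF Q(1) QA(2)] by simp
  moreover have "T \<subseteq> fst ` signed s" using T threshold_tags_subset by simp
  then have "finite T" using sig_inv_tagsD(1)[OF sig] by (meson finite_imageI finite_subset)
  ultimately show ?thesis using \<open>t\<phi> \<le> tmax\<close> by (meson Max_ge order_trans)
qed

lemma response_after_completed_put:
  assumes reach: "reachable s" and bd: "writes_conc_bounded \<delta> (hist s)"
    and put: "PrimInv \<phi> c1 (PutData t\<phi> v\<phi>) \<in> set (hist s)"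
    and prec: "precedes (hist s) (PrimResp \<phi> RAck) (PrimInv \<pi> c2 pk)"
    and pk: "pk = GetTag \<or> pk = GetData"
    and resp: "n < length (hist s)" "hist s ! n = PrimResp \<pi> r"
  shows "\<exists>t. (r = RTag t \<or> (\<exists>v. r = RPair t v)) \<and> t\<phi> \<le> t"
proof -
  \<comment> \<open>the response is produced by a step from a reachable state \<open>s1\<close> in which \<open>\<pi>\<close> is
      still pending; the argument is carried out in \<open>s1\<close>, whose history is a prefix of \<open>hist s\<close>\<close>
  obtain s1 s2 E where s1: "reachable s1" "prot_step s1 s2" "length (hist s1) \<le> n"
      "n < length (hist s2)" and E: "hist s = hist s2 @ E"
    using reachable_event_source[OF reach resp(1)] by blast
  have wf: "wf_history s" using reachable_invariants[OF reach] by blast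
  have wf1: "wf_history s1" and sig1: "sig_inv s1" and ack1: "ack_inv s1"
    using reachable_invariants[OF s1(1)] by blast+
  obtain E1 where h: "hist s = hist s1 @ E1" using step_hist_extends[OF s1(2)] E by fastforce
  then have bd1: "writes_conc_bounded \<delta> (hist s1)"
    using writes_conc_bounded_prefix[of \<delta> "hist s1" E1] bd wf by (simp add: wf_history_def)
  have resp2: "hist s2 ! n = PrimResp \<pi> r" using resp(2) E s1(4) by (simp add: nth_append)
  note logged = phase_logged_state[OF wf1]
  from new_prim_response[OF s1(2-4) resp2] show ?thesis
  proof (elim disjE exE conjE)
    fix c oi v R Q assume GT: "ph s1 c = GT oi \<pi> v R" and Q: "is_quorum C k Q" "Q \<subseteq> dom R"
      and r: "r = RTag (Max {fst x | x j. j \<in> Q \<and> R j = Some x \<and> x \<in> signed s1})"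
    have "PrimInv \<pi> c GetTag \<in> set (hist s1)" using logged[of c] GT by simp
    then show ?thesis
      using completed_put_in_prefix[OF wf ack1 h _ put prec] get_tag_sound[OF wf1 sig1 ack1 GT Q refl] r
      by blast
  next
    fix c oi R Q w assume GD: "ph s1 c = GD oi \<pi> R" and Q: "is_quorum C k Q" "Q \<subseteq> dom R"
      and r: "r = RPair (Max {t. k \<le> card {j \<in> Q. \<exists>e \<sigma>. (t, e, \<sigma>) \<in> the (R j) \<inter> signed s1}}) w"
    have "PrimInv \<pi> c GetData \<in> set (hist s1)" using logged[of c] GD by (auto dest: nth_mem)
    then show ?thesis using completed_put_in_prefix[OF wf ack1 h _ put prec]
        get_data_sound[OF wf1 sig1 ack1 bd1 GD Q refl] r
      by blast
  next
    fix c oi t v S A assume "ph s1 c = PD oi \<pi> t v S A"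
    then have "PrimInv \<pi> c (PutData t v) \<in> set (hist s1)" using logged[of c] by simp
    then show ?thesis using completed_put_in_prefix[OF wf ack1 h _ put prec] pk by simp
  qed
qed

end

theorem mainTheorem4:
  fixes C B :: "'p set" and k b \<delta> :: nat
    and enc :: "'v \<Rightarrow> 'p \<Rightarrow> 'e" and dec :: "('p \<times> 'e) set \<Rightarrow> 'v"
    and t0 :: "nat \<times> 'c::linorder" and v0 :: 'v
    and s :: "('p,'c,'v,'e) gstate"
    and \<phi> \<pi> a1 a2 b1 b2 :: nat and c1 c2 :: 'c
    and t\<phi> :: "nat \<times> 'c" and v\<phi> :: 'v and pk :: "('c,'v) pkind" and r :: "('c,'v) presult"
  assumes "finite C" and "1 \<le> k" and "k \<le> card C" and "1 \<le> \<delta>"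
    and "B \<subseteq> C" and "card B \<le> b" and "real b < (real (card C) - real k) / 3"
    and "reach C B k \<delta> enc dec t0 v0 s"
    and "writes_conc_bounded \<delta> (hist s)"
    and "a1 < length (hist s)" and "hist s ! a1 = PrimInv \<phi> c1 (PutData t\<phi> v\<phi>)"
    and "a2 < length (hist s)" and "hist s ! a2 = PrimResp \<phi> RAck"
    and "a2 < b1"
    and "b1 < length (hist s)" and "hist s ! b1 = PrimInv \<pi> c2 pk" and "pk = GetTag \<or> pk = GetData"
    and "b2 < length (hist s)" and "hist s ! b2 = PrimResp \<pi> r"
  shows "\<exists>t. (r = RTag t \<or> (\<exists>v. r = RPair t v)) \<and> t\<phi> \<le> t"
proof -
  have "real (3 * card B + k) < real (card C)" using assms(6,7) by simp
  then have "3 * card B + k < card C" by (simp only: of_nat_less_iff)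
  then interpret byzantine_protocol C B k \<delta> enc dec t0 v0
    using assms(1,2,5) by unfold_locales auto
  have "PrimInv \<phi> c1 (PutData t\<phi> v\<phi>) \<in> set (hist s)" using assms(10,11) by (metis nth_mem)
  moreover have "precedes (hist s) (PrimResp \<phi> RAck) (PrimInv \<pi> c2 pk)"
    using assms(12-16) unfolding precedes_def by blast
  ultimately show ?thesis using response_after_completed_put assms(8,9,17-19) by blast
qed

end
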